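(* For any $n, k \in \mathbb{Z}_{\geq 0}$ and any two dynamic metric spaces $\gamma_X, \gamma_Y$, \[ d_H^{\mathrm{ero}}(D^n_k(\gamma_X), D^n_k(\gamma_Y)) \leq d_H(D^n_k(\gamma_X), D^n_k(\gamma_Y)) \leq 2 \cdot d_{\mathrm{dyn}}(\gamma_X, \gamma_Y). \]
   Context: A dynamic metric space (DMS) $\gamma_X=(X,d_X(\cdot))$ is a finite set $X$ with $d_X:\mathbb{R}\times X\times X\to\mathbb{R}_{\ge0}$, each $d_X(t)$ a pseudometric, each $t\mapsto d_X(t)(x,x')$ continuous. For $S\subseteq X$, $\gamma_S=(S,d_X|_S)$; $d_X(I)(x,x')=\inf_{t\in I}d_X(t)(x,x')$ for compact intervals $I$. $\mathcal{R}_\delta(d)$ is the Rips complex (simplices: finite nonempty $\sigma$ with all pairwise $d\le\delta$). $\mathbf{Dyn}$ is the poset of $(I,\delta)$ ($I$ compact interval, $\delta\ge0$) ordered by $I\subseteq I'$, $\delta\le\delta'$; $\mathcal{R}^{\mathrm{lev}}(\gamma_X)(I,\delta)=\mathcal{R}_\delta(d_X(I))$ with inclusions; $H_k$ is homology over a fixed field. $K_n(\gamma_X)=\{\gamma_S:S\subseteq X,|S|\le n\}$ and $D_k^n(\gamma_X)=\{H_k(\mathcal{R}^{\mathrm{lev}}(\gamma_S)):\gamma_S\in K_n(\gamma_X)\}$. Interleaving distance $d_I^{\mathbf{Vec}}$ on $\mathbf{Dyn}$-modules: with shift $([a,b],\delta)^\varepsilon=([a-\varepsilon,b+\varepsilon],\delta+\varepsilon)$,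 $\mathbb{V},\mathbb{W}$ are $\varepsilon$-interleaved if there are natural maps $f_p:\mathbb{V}(p)\to\mathbb{W}(p^\varepsilon)$, $g_p:\mathbb{W}(p)\to\mathbb{V}(p^\varepsilon)$ whose composites are the structure maps $p\le p^{2\varepsilon}$; $d_I^{\mathbf{Vec}}$ is the infimal such $\varepsilon$. Erosion distance on $\mathbf{Dyn}$-modules: let $\mathbb{R}^6_\times=\mathbb{R}\times\mathbb{R}^{op}\times\mathbb{R}^{op}\times\mathbb{R}^{op}\times\mathbb{R}\times\mathbb{R}$ with the product order. A point $\mathbf{a}=(a_1,\dots,a_6)$ is admissible if $a_1\le a_2$, $a_3\ge0$, $a_4\le a_5$, $a_6\ge0$, and $([a_1,a_2],a_3)\le([a_4,a_5],a_6)$ in $\mathbf{Dyn}$; a non-admissible $\mathbf{a}$ is trivially non-admissible if no admissible $\mathbf{b}<\mathbf{a}$ exists. The adapted rank invariant is $\mathrm{rk}_\mathbb{V}(\mathbf{a})=\mathrm{rank}\,\mathbb{V}(([a_1,a_2],a_3)\le([a_4,a_5],a_6))$ if $\mathbf{a}$ is admissible, $\infty$ if trivially non-admissible, $0$ otherwise. With $\mathbf{a}^{+\varepsilon}=\mathbf{a}+\varepsilon(1,-1,-1,-1,1,1)$, $d_E(\mathrm{rk}_\mathbb{V},\mathrm{rk}_\mathbb{W})=\inf\{\varepsilon>0:\forall\mathbf{a}\in\mathbb{R}^6_\times,\ \mathrm{rk}_\mathbb{V}(\mathbf{a}^{+\varepsilon})\le\mathrm{rk}_\mathbb{W}(\mathbf{a}),\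 \mathrm{rk}_\mathbb{W}(\mathbf{a}^{+\varepsilon})\le\mathrm{rk}_\mathbb{V}(\mathbf{a})\}$. For a metric $\rho$ on modules, the induced Hausdorff distance on sets is $\max\{\sup_{\mathbb{V}\in P}\inf_{\mathbb{W}\in Q}\rho,\sup_{\mathbb{W}\in Q}\inf_{\mathbb{V}\in P}\rho\}$; $d_H$ uses $\rho=d_I^{\mathbf{Vec}}$ and $d_H^{\mathrm{ero}}$ uses $\rho(\mathbb{V},\mathbb{W})=d_E(\mathrm{rk}_\mathbb{V},\mathrm{rk}_\mathbb{W})$. The distance $d_{\mathrm{dyn}}$: a tripod is a set $Z$ with surjections $\varphi_X:Z\to X$, $\varphi_Y:Z\to Y$; it is a $(2,\varepsilon)$-tripod if for all $t\in\mathbb{R}$, $z,z'\in Z$: $\min_{t'\in[t-\varepsilon,t+\varepsilon]}d_X(t')(\varphi_Xz,\varphi_Xz')\le d_Y(t)(\varphi_Yz,\varphi_Yz')+2\varepsilon$ and symmetrically with $X,Y$ swapped; $d_{\mathrm{dyn}}$ is the infimum over tripods of the infimal such $\varepsilon>0$. *)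

theory Defs
  imports Complex_Main "HOL-Library.Extended_Real"
begin

definition dms :: "'a set \<Rightarrow> (real \<Rightarrow> 'a \<Rightarrow> 'a \<Rightarrow> real) \<Rightarrow> bool" where
  "dms X d \<longleftrightarrow> finite X \<and>
     (\<forall>t. \<forall>x\<in>X. \<forall>y\<in>X. 0 \<le> d t x y \<and> d t x x = 0 \<and> d t x y = d t y x \<and>
            (\<forall>z\<in>X. d t x z \<le> d t x y + d t y z)) \<and>
     (\<forall>x\<in>X. \<forall>y\<in>X. continuous_on UNIV (\<lambda>t. d t x y))"

definition int_dist :: "(real \<Rightarrow> 'a \<Rightarrow> 'a \<Rightarrow> real) \<Rightarrow> real \<Rightarrow> real \<Rightarrow> 'a \<Rightarrow> 'a \<Rightarrow> real" where
  "int_dist d a b x y = Inf ((\<lambda>t. d t x y) ` {a..b})"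

definition rips :: "('a \<Rightarrow> 'a \<Rightarrow> real) \<Rightarrow> 'a set \<Rightarrow> real \<Rightarrow> 'a set set" where
  "rips d S \<delta> = {\<sigma>. \<sigma> \<subseteq> S \<and> finite \<sigma> \<and> \<sigma> \<noteq> {} \<and> (\<forall>x\<in>\<sigma>. \<forall>y\<in>\<sigma>. d x y \<le> \<delta>)}"

text \<open>Points of Dyn: (a,b,delta) stands for ([a,b],delta).\<close>
type_synonym dynp = "real \<times> real \<times> real"

definition valid_dp :: "dynp \<Rightarrow> bool" where
  "valid_dp p = (case p of (a,b,\<delta>) \<Rightarrow> a \<le> b \<and> 0 \<le> \<delta>)"

definition dp_le :: "dynp \<Rightarrow> dynp \<Rightarrow> bool" where
  "dp_le p q = (case p of (a,b,\<delta>) \<Rightarrow> case q of (a',b',\<delta>') \<Rightarrow> a' \<le> a \<and> b \<le> b' \<and> \<delta> \<le> \<delta>')"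

definition dp_shift :: "real \<Rightarrow> dynp \<Rightarrow> dynp" where
  "dp_shift \<epsilon> p = (case p of (a,b,\<delta>) \<Rightarrow> (a - \<epsilon>, b + \<epsilon>, \<delta> + \<epsilon>))"

definition rips_lev :: "(real \<Rightarrow> 'a \<Rightarrow> 'a \<Rightarrow> real) \<Rightarrow> 'a set \<Rightarrow> dynp \<Rightarrow> 'a set set" where
  "rips_lev d S p = (case p of (a,b,\<delta>) \<Rightarrow> rips (int_dist d a b) S \<delta>)"

section \<open>Simplicial homology over a field (ordered simplices via the linear order)\<close>

definition oriented_simplices :: "nat \<Rightarrow> ('a::linorder) set set \<Rightarrow> 'a list set" where
  "oriented_simplices k K = {\<sigma>. sorted_wrt (<) \<sigma> \<and> length \<sigma> = Suc k \<and> set \<sigma> \<in> K}"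

definition chains :: "nat \<Rightarrow> ('a::linorder) set set \<Rightarrow> ('a list \<Rightarrow> 'f::field) set" where
  "chains k K = {c. \<forall>\<sigma>. c \<sigma> \<noteq> 0 \<longrightarrow> \<sigma> \<in> oriented_simplices k K}"

definition del_nth :: "nat \<Rightarrow> 'a list \<Rightarrow> 'a list" where
  "del_nth i xs = take i xs @ drop (Suc i) xs"

text \<open>Boundary operator (non-augmented: nothing is mapped to the empty simplex).\<close>
definition bd :: "('a list \<Rightarrow> 'f::field) \<Rightarrow> ('a list \<Rightarrow> 'f)" where
  "bd c = (\<lambda>\<tau>. if \<tau> = [] then 0 else
      (\<Sum>\<sigma>\<in>{\<sigma>. c \<sigma> \<noteq> 0}. c \<sigma> * (\<Sum>i<length \<sigma>. if del_nth i \<sigma> = \<tau> then (-1)^i else 0)))"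

definition cycles :: "nat \<Rightarrow> ('a::linorder) set set \<Rightarrow> ('a list \<Rightarrow> 'f::field) set" where
  "cycles k K = {c \<in> chains k K. bd c = (\<lambda>_. 0)}"

definition boundaries :: "nat \<Rightarrow> ('a::linorder) set set \<Rightarrow> ('a list \<Rightarrow> 'f::field) set" where
  "boundaries k K = bd ` chains (Suc k) K"

definition homology :: "nat \<Rightarrow> ('a::linorder) set set \<Rightarrow> ('a list \<Rightarrow> 'f::field) set set" where
  "homology k K = {(\<lambda>b. \<lambda>\<sigma>. z \<sigma> + b \<sigma>) ` boundaries k K | z. z \<in> cycles k K}"

definition csum :: "('x \<Rightarrow> 'f::field) set \<Rightarrow> ('x \<Rightarrow> 'f) set \<Rightarrow> ('x \<Rightarrow> 'f) set" where
  "csum A A' = {(\<lambda>x. a x + a' x) | a a'. a \<in> A \<and> a' \<in> A'}"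

definition cscale :: "'f::field \<Rightarrow> ('x \<Rightarrow> 'f) set \<Rightarrow> ('x \<Rightarrow> 'f) set" where
  "cscale c A = (\<lambda>a x. c * a x) ` A"

text \<open>A module: carrier vector spaces V(p) and structure maps V(p \<le> q).\<close>
type_synonym ('x,'f) dmod =
  "(dynp \<Rightarrow> ('x \<Rightarrow> 'f) set set) \<times> (dynp \<Rightarrow> dynp \<Rightarrow> ('x \<Rightarrow> 'f) set \<Rightarrow> ('x \<Rightarrow> 'f) set)"

text \<open>H_k(R^lev(gamma_S)); structure maps induced by inclusion: [z] in B_p-class goes to [z] in B_q-class.\<close>
definition hom_module :: "nat \<Rightarrow> (real \<Rightarrow> 'a \<Rightarrow> 'a \<Rightarrow> real) \<Rightarrow> ('a::linorder) set \<Rightarrow> ('a list, 'f::field) dmod" where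
  "hom_module k d S =
     (\<lambda>p. homology k (rips_lev d S p),
      \<lambda>p q A. csum A (boundaries k (rips_lev d S q)))"

definition dgm_set :: "nat \<Rightarrow> nat \<Rightarrow> ('a::linorder) set \<Rightarrow> (real \<Rightarrow> 'a \<Rightarrow> 'a \<Rightarrow> real) \<Rightarrow> ('a list, 'f::field) dmod set" where
  "dgm_set k n X d = {hom_module k d S | S. S \<subseteq> X \<and> card S \<le> n}"

definition lin_map :: "(('x \<Rightarrow> 'f::field) set \<Rightarrow> ('y \<Rightarrow> 'f) set) \<Rightarrow> ('x \<Rightarrow> 'f) set set \<Rightarrow> ('y \<Rightarrow> 'f) set set \<Rightarrow> bool" where
  "lin_map f C D \<longleftrightarrow> (\<forall>A\<in>C. f A \<in> D) \<and>
     (\<forall>A\<in>C. \<forall>A'\<in>C. f (csum A A') = csum (f A) (f A')) \<and>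
     (\<forall>c. c \<noteq> 0 \<longrightarrow> (\<forall>A\<in>C. f (cscale c A) = cscale c (f A)))"

definition shifted_morph :: "real \<Rightarrow> (dynp \<Rightarrow> ('x \<Rightarrow> 'f::field) set \<Rightarrow> ('y \<Rightarrow> 'f) set) \<Rightarrow> ('x,'f) dmod \<Rightarrow> ('y,'f) dmod \<Rightarrow> bool" where
  "shifted_morph \<epsilon> f V W \<longleftrightarrow>
     (\<forall>p. valid_dp p \<longrightarrow> lin_map (f p) (fst V p) (fst W (dp_shift \<epsilon> p))) \<and>
     (\<forall>p q. valid_dp p \<and> valid_dp q \<and> dp_le p q \<longrightarrow>
        (\<forall>A\<in>fst V p. f q (snd V p q A) = snd W (dp_shift \<epsilon> p) (dp_shift \<epsilon> q) (f p A)))"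

definition interleaved :: "real \<Rightarrow> ('x,'f::field) dmod \<Rightarrow> ('y,'f) dmod \<Rightarrow> bool" where
  "interleaved \<epsilon> V W \<longleftrightarrow> (\<exists>f g. shifted_morph \<epsilon> f V W \<and> shifted_morph \<epsilon> g W V \<and>
     (\<forall>p. valid_dp p \<longrightarrow> (\<forall>A\<in>fst V p. g (dp_shift \<epsilon> p) (f p A) = snd V p (dp_shift (2*\<epsilon>) p) A)) \<and>
     (\<forall>p. valid_dp p \<longrightarrow> (\<forall>A\<in>fst W p. f (dp_shift \<epsilon> p) (g p A) = snd W p (dp_shift (2*\<epsilon>) p) A)))"

definition interleaving_dist :: "('x,'f::field) dmod \<Rightarrow> ('y,'f) dmod \<Rightarrow> ereal" where
  "interleaving_dist V W = Inf {ereal \<epsilon> | \<epsilon>. 0 \<le> \<epsilon> \<and> interleaved \<epsilon> V W}"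

text \<open>Linear independence of a list of cosets in the quotient space C (zero = the class containing 0).\<close>
definition cls_indep :: "('x \<Rightarrow> 'f::field) set set \<Rightarrow> ('x \<Rightarrow> 'f) set list \<Rightarrow> bool" where
  "cls_indep C As \<longleftrightarrow> (\<forall>(c::nat \<Rightarrow> 'f) zs.
     length zs = length As \<and> (\<forall>i<length As. zs ! i \<in> As ! i) \<and>
     (\<exists>A0\<in>C. (\<lambda>_. 0) \<in> A0 \<and> (\<lambda>x. \<Sum>i<length As. c i * (zs ! i) x) \<in> A0)
     \<longrightarrow> (\<forall>i<length As. c i = 0))"

definition rank_map :: "('x,'f::field) dmod \<Rightarrow> dynp \<Rightarrow> dynp \<Rightarrow> enat" where
  "rank_map V p q = Sup {enat n | n. \<exists>As. length As = n \<and> set As \<subseteq> snd V p q ` fst V p \<and> cls_indep (fst V q) As}"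

type_synonym r6 = "real \<times> real \<times> real \<times> real \<times> real \<times> real"

definition admissible :: "r6 \<Rightarrow> bool" where
  "admissible a = (case a of (a1,a2,a3,a4,a5,a6) \<Rightarrow>
     a1 \<le> a2 \<and> 0 \<le> a3 \<and> a4 \<le> a5 \<and> 0 \<le> a6 \<and> dp_le (a1,a2,a3) (a4,a5,a6))"

definition le6 :: "r6 \<Rightarrow> r6 \<Rightarrow> bool" where
  "le6 b a = (case b of (b1,b2,b3,b4,b5,b6) \<Rightarrow> case a of (a1,a2,a3,a4,a5,a6) \<Rightarrow>
     b1 \<le> a1 \<and> a2 \<le> b2 \<and> a3 \<le> b3 \<and> a4 \<le> b4 \<and> b5 \<le> a5 \<and> b6 \<le> a6)"

definition triv_nonadmissible :: "r6 \<Rightarrow> bool" where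
  "triv_nonadmissible a \<longleftrightarrow> \<not> admissible a \<and> \<not> (\<exists>b. admissible b \<and> le6 b a \<and> b \<noteq> a)"

definition adapted_rank :: "('x,'f::field) dmod \<Rightarrow> r6 \<Rightarrow> enat" where
  "adapted_rank V a = (case a of (a1,a2,a3,a4,a5,a6) \<Rightarrow>
     if admissible a then rank_map V (a1,a2,a3) (a4,a5,a6)
     else if triv_nonadmissible a then \<infinity> else 0)"

definition r6_shift :: "real \<Rightarrow> r6 \<Rightarrow> r6" where
  "r6_shift \<epsilon> a = (case a of (a1,a2,a3,a4,a5,a6) \<Rightarrow>
     (a1 + \<epsilon>, a2 - \<epsilon>, a3 - \<epsilon>, a4 - \<epsilon>, a5 + \<epsilon>, a6 + \<epsilon>))"

definition erosion_dist :: "('x,'f::field) dmod \<Rightarrow> ('y,'f) dmod \<Rightarrow> ereal" where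
  "erosion_dist V W = Inf {ereal \<epsilon> | \<epsilon>. 0 < \<epsilon> \<and>
     (\<forall>a. adapted_rank V (r6_shift \<epsilon> a) \<le> adapted_rank W a \<and>
          adapted_rank W (r6_shift \<epsilon> a) \<le> adapted_rank V a)}"

definition hausdorff :: "('v \<Rightarrow> 'w \<Rightarrow> ereal) \<Rightarrow> 'v set \<Rightarrow> 'w set \<Rightarrow> ereal" where
  "hausdorff \<rho> P Q = max (SUP V\<in>P. INF W\<in>Q. \<rho> V W) (SUP W\<in>Q. INF V\<in>P. \<rho> V W)"

definition tripod :: "'c set \<Rightarrow> ('c \<Rightarrow> 'a) \<Rightarrow> ('c \<Rightarrow> 'b) \<Rightarrow> 'a set \<Rightarrow> 'b set \<Rightarrow> bool" where
  "tripod Z \<phi>X \<phi>Y X Y \<longleftrightarrow> \<phi>X ` Z = X \<and> \<phi>Y ` Z = Y"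

definition tripod_2eps :: "real \<Rightarrow> (real \<Rightarrow> 'a \<Rightarrow> 'a \<Rightarrow> real) \<Rightarrow> (real \<Rightarrow> 'b \<Rightarrow> 'b \<Rightarrow> real) \<Rightarrow> 'c set \<Rightarrow> ('c \<Rightarrow> 'a) \<Rightarrow> ('c \<Rightarrow> 'b) \<Rightarrow> bool" where
  "tripod_2eps \<epsilon> dX dY Z \<phi>X \<phi>Y \<longleftrightarrow> (\<forall>t. \<forall>z\<in>Z. \<forall>z'\<in>Z.
     Inf ((\<lambda>t'. dX t' (\<phi>X z) (\<phi>X z')) ` {t - \<epsilon>..t + \<epsilon>}) \<le> dY t (\<phi>Y z) (\<phi>Y z') + 2 * \<epsilon> \<and>
     Inf ((\<lambda>t'. dY t' (\<phi>Y z) (\<phi>Y z')) ` {t - \<epsilon>..t + \<epsilon>}) \<le> dX t (\<phi>X z) (\<phi>X z') + 2 * \<epsilon>)"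

text \<open>Tripods are taken with Z of type 'a * 'b; every tripod's image in X x Y is such a
  tripod satisfying the same inequalities, so this gives the same infimum.\<close>
definition d_dyn :: "'a set \<Rightarrow> (real \<Rightarrow> 'a \<Rightarrow> 'a \<Rightarrow> real) \<Rightarrow> 'b set \<Rightarrow> (real \<Rightarrow> 'b \<Rightarrow> 'b \<Rightarrow> real) \<Rightarrow> ereal" where
  "d_dyn X dX Y dY = Inf {ereal \<epsilon> | \<epsilon>. 0 < \<epsilon> \<and>
     (\<exists>(Z::('a \<times> 'b) set) \<phi>X \<phi>Y. tripod Z \<phi>X \<phi>Y X Y \<and> tripod_2eps \<epsilon> dX dY Z \<phi>X \<phi>Y)}"

end

(*
  The first inequality holds module by module: an \<epsilon>-interleaving factors every structure map
  of one module, shifted by \<epsilon> in each coordinate of the index, through a structure map of the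
  other, so its rank can only drop; hence shifting the six-parameter index by more than \<epsilon>
  bounds each adapted rank by the other module's.

  For the second, a (2,\<epsilon>)-tripod between the two spaces assigns to every finite S \<subseteq> X a
  vertex map \<psi> onto T = \<psi>(S) \<subseteq> Y, so |T| \<le> |S|, together with a section \<psi>' of \<psi>.
  Both maps are simplicial between levelset Rips complexes after shifting the index by 2\<epsilon>,
  and \<psi>' \<circ> \<psi> is contiguous to the identity after shifting by 4\<epsilon>. Contiguous maps agree
  in homology (moving one vertex at a time, each move being a cone-shaped chain homotopy),
  so the induced maps form a 2\<epsilon>-interleaving of H_k(R^lev(S)) and H_k(R^lev(T)).
  Homology is computed with chains on sorted vertex lists; a vertex map acts on them by
  sorting its image lists with the sign of the sorting permutation.
*)

theory Submission
  imports Defs "HOL-Library.Multiset"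
begin

fun inversions :: "'a::linorder list \<Rightarrow> nat" where
  "inversions [] = 0"
| "inversions (x # xs) = length (filter (\<lambda>y. y < x) xs) + inversions xs"

definition swap_adj :: "nat \<Rightarrow> 'a list \<Rightarrow> 'a list" where
  "swap_adj j l = l[j := l ! Suc j, Suc j := l ! j]"

definition swap_negates :: "('a list \<Rightarrow> 'm::ab_group_add) \<Rightarrow> bool" where
  "swap_negates F \<longleftrightarrow> (\<forall>l j. Suc j < length l \<longrightarrow> F (swap_adj j l) = - F l)"

definition adj_dup_vanishes :: "('a list \<Rightarrow> 'm::zero) \<Rightarrow> bool" where
  "adj_dup_vanishes F \<longleftrightarrow> (\<forall>l j. Suc j < length l \<and> l ! j = l ! Suc j \<longrightarrow> F l = 0)"

lemma length_swap_adj [simp]: "length (swap_adj j l) = length l"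
  by (simp add: swap_adj_def)

lemma mset_swap_adj: "Suc j < length l \<Longrightarrow> mset (swap_adj j l) = mset l"
  unfolding swap_adj_def using mset_swap[of "Suc j" l j] by simp

lemma distinct_swap_adj: "Suc j < length l \<Longrightarrow> distinct (swap_adj j l) = distinct l"
  by (metis mset_swap_adj distinct_count_atmost_1 count_mset set_mset_mset)

lemma sort_swap_adj: "Suc j < length l \<Longrightarrow> sort (swap_adj j l) = sort l"
  by (metis mset_swap_adj properties_for_sort mset_sort sorted_sort)

lemma swap_adj_swap_adj: "Suc j < length l \<Longrightarrow> swap_adj j (swap_adj j l) = l"
  unfolding swap_adj_def by (simp add: list_eq_iff_nth_eq nth_list_update)

lemma inversions_swap_adj_less:
  "Suc j < length l \<Longrightarrow> l ! j < l ! Suc j \<Longrightarrow> inversions (swap_adj j l) = Suc (inversions l)"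
proof (induction l arbitrary: j)
  case Nil
  then show ?case by simp
next
  case (Cons x xs)
  show ?case
  proof (cases j)
    case 0
    with Cons obtain b ys where "xs = b # ys" by (cases xs) auto
    with Cons 0 show ?thesis by (auto simp: swap_adj_def)
  next
    case (Suc j')
    with Cons have "mset (swap_adj j' xs) = mset xs" by (simp add: mset_swap_adj)
    then have "length (filter (\<lambda>y. y < x) (swap_adj j' xs)) = length (filter (\<lambda>y. y < x) xs)"
      by (metis mset_filter size_mset)
    with Cons Suc show ?thesis by (simp add: swap_adj_def)
  qed
qed

lemma inversions_swap_adj_greater:
  assumes "Suc j < length l" "l ! Suc j < l ! j"
  shows "inversions l = Suc (inversions (swap_adj j l))"
  using inversions_swap_adj_less[of j "swap_adj j l"] assms
  by (simp add: swap_adj_swap_adj) (simp add: swap_adj_def nth_list_update)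

lemma swap_negates_nondistinct_pos:
  assumes A: "swap_negates F" and V: "adj_dup_vanishes F"
  shows "p < q \<Longrightarrow> q < length l \<Longrightarrow> l ! p = l ! q \<Longrightarrow> F l = 0"
proof (induction "q - p" arbitrary: q l)
  case 0
  then show ?case by simp
next
  case (Suc d)
  show ?case
  proof (cases "q = Suc p")
    case True
    with Suc.prems V show ?thesis unfolding adj_dup_vanishes_def by auto
  next
    case False
    then have pq: "p < q - 1" "Suc (q - 1) = q" using Suc.prems by auto
    let ?l = "swap_adj (q - 1) l"
    have "F ?l = - F l" using A pq Suc.prems unfolding swap_negates_def by simp
    moreover have "?l ! p = l ! p" "?l ! (q - 1) = l ! q"
      using pq Suc.prems by (auto simp: swap_adj_def nth_list_update)
    then have "F ?l = 0"
      using Suc.hyps(1)[of "q - 1" ?l] Suc.prems pq Suc.hyps(2) by auto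
    ultimately show ?thesis by simp
  qed
qed

lemma swap_negates_nondistinct:
  assumes "swap_negates F" "adj_dup_vanishes F" "\<not> distinct l"
  shows "F l = 0"
proof -
  from assms(3) obtain p q where "p < length l" "q < length l" "p \<noteq> q" "l ! p = l ! q"
    by (auto simp: distinct_conv_nth)
  then show ?thesis
    using swap_negates_nondistinct_pos[OF assms(1,2), of p q l]
      swap_negates_nondistinct_pos[OF assms(1,2), of q p l]
    by (cases "p < q") auto
qed

lemma distinct_unsorted_descent:
  fixes l :: "'a::linorder list"
  assumes "distinct l" "\<not> sorted_wrt (<) l"
  obtains j where "Suc j < length l" "l ! Suc j < l ! j"
proof -
  have "\<not> sorted l" using assms by (simp add: strict_sorted_iff)
  then show ?thesis using that by (meson not_less sorted_iff_nth_Suc)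
qed

lemma inversions_sorted: "sorted_wrt (<) l \<Longrightarrow> inversions l = 0"
  by (induction l) (auto simp: filter_empty_conv)

lemma swap_negates_eq_sign_sort:
  fixes F :: "'a::linorder list \<Rightarrow> 'm::ring_1"
  assumes A: "swap_negates F" and V: "adj_dup_vanishes F"
  shows "F l = (if distinct l then (-1) ^ inversions l * F (sort l) else 0)"
proof (induction "inversions l" arbitrary: l rule: less_induct)
  case less
  consider "\<not> distinct l" | "sorted_wrt (<) l" | j where "distinct l" "Suc j < length l" "l ! Suc j < l ! j"
    using distinct_unsorted_descent by blast
  then show ?case
  proof cases
    case 1
    then show ?thesis using swap_negates_nondistinct[OF A V] by simp
  next
    case 2
    then show ?thesis by (simp add: inversions_sorted strict_sorted_iff sorted_sort_id)
  next
    case 3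
    then have n: "inversions l = Suc (inversions (swap_adj j l))"
      by (simp add: inversions_swap_adj_greater)
    have "F (swap_adj j l) = (-1) ^ inversions (swap_adj j l) * F (sort l)"
      using less[of "swap_adj j l"] n 3 by (simp add: distinct_swap_adj sort_swap_adj)
    moreover have "F (swap_adj j l) = - F l" using A 3 unfolding swap_negates_def by blast
    ultimately have "F l = - ((-1) ^ inversions (swap_adj j l) * F (sort l))" by (metis minus_minus)
    then show ?thesis using n 3 by simp
  qed
qed

lemma length_del_nth [simp]: "i < length l \<Longrightarrow> length (del_nth i l) = length l - 1"
  by (simp add: del_nth_def)

lemma nth_del_nth:
  "i < length l \<Longrightarrow> p < length l - 1 \<Longrightarrow> del_nth i l ! p = (if p < i then l ! p else l ! Suc p)"
  by (simp add: del_nth_def nth_append min_def)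

lemma del_nth_swap_adj: "Suc i < length m \<Longrightarrow> del_nth i (swap_adj i m) = del_nth (Suc i) m"
  by (rule nth_equalityI) (auto simp: nth_del_nth swap_adj_def nth_list_update less_Suc_eq)

lemma adj_dup_not_distinct: "Suc j < length l \<Longrightarrow> l!j = l!Suc j \<Longrightarrow> \<not> distinct l"
  by (metis Suc_lessD distinct_conv_nth n_not_Suc_n)

lemma del_nth_Suc_swap_adj: "Suc j < length l \<Longrightarrow> del_nth (Suc j) (swap_adj j l) = del_nth j l"
  by (rule nth_equalityI) (auto simp: nth_del_nth swap_adj_def nth_list_update less_Suc_eq)

lemma del_nth_swap_adj_less:
  "i < j \<Longrightarrow> Suc j < length l \<Longrightarrow> del_nth i (swap_adj j l) = swap_adj (j - 1) (del_nth i l)"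
  by (rule nth_equalityI) (auto simp: nth_del_nth swap_adj_def nth_list_update)

lemma del_nth_swap_adj_greater:
  "Suc j < i \<Longrightarrow> i < length l \<Longrightarrow> del_nth i (swap_adj j l) = swap_adj j (del_nth i l)"
  by (rule nth_equalityI) (auto simp: nth_del_nth swap_adj_def nth_list_update)

lemma del_nth_adj_dup: "Suc j < length l \<Longrightarrow> l!j = l!Suc j \<Longrightarrow> del_nth j l = del_nth (Suc j) l"
  by (rule nth_equalityI) (auto simp: nth_del_nth less_Suc_eq)

lemma del_nth_adj_dup_not_distinct:
  assumes "Suc j < length l" "l!j = l!Suc j" "i < length l" "i \<noteq> j" "i \<noteq> Suc j"
  shows "\<not> distinct (del_nth i l)"
proof (cases "i < j")
  case True
  have "del_nth i l ! (j - 1) = l!j" "del_nth i l ! j = l ! Suc j"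
    using assms True by (auto simp: nth_del_nth)
  moreover have "Suc (j - 1) < length (del_nth i l)" using assms True by simp
  ultimately show ?thesis using assms(2) True adj_dup_not_distinct[of "j - 1" "del_nth i l"] by simp
next
  case False
  then have "Suc j < i" using assms by simp
  then have "del_nth i l ! j = l!j" "del_nth i l ! Suc j = l ! Suc j"
    using assms by (auto simp: nth_del_nth)
  moreover have "Suc j < length (del_nth i l)" using assms \<open>Suc j < i\<close> by simp
  ultimately show ?thesis using assms(2) adj_dup_not_distinct[of j "del_nth i l"] by simp
qed

lemma map_del_nth: "map \<phi> (del_nth i l) = del_nth i (map \<phi> l)"
  by (simp add: del_nth_def take_map drop_map)

lemma sorted_del_nth: "sorted_wrt (<) l \<Longrightarrow> sorted_wrt (<) (del_nth i l)"
proof -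
  assume s: "sorted_wrt (<) l"
  have s2: "sorted_wrt (<) (take (Suc i) l @ drop (Suc i) l)" using s by (simp only: append_take_drop_id)
  then have cross: "\<forall>x\<in>set (take (Suc i) l). \<forall>y\<in>set (drop (Suc i) l). x < y"
    by (simp only: sorted_wrt_append) blast
  have "set (take i l) \<subseteq> set (take (Suc i) l)" by (rule set_take_subset_set_take) simp
  with cross have "\<forall>x\<in>set (take i l). \<forall>y\<in>set (drop (Suc i) l). x < y" by blast
  then show ?thesis unfolding del_nth_def using s
    by (simp add: sorted_wrt_append sorted_wrt_take sorted_wrt_drop)
qed

lemma in_set_del_nth:
  assumes i: "i < length l"
  shows "v \<in> set (del_nth i l) \<longleftrightarrow> (\<exists>p<length l. p \<noteq> i \<and> l!p = v)"
proof
  assume "v \<in> set (del_nth i l)"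
  then obtain p' where p': "p' < length l - 1" "del_nth i l ! p' = v"
    using i by (auto simp: in_set_conv_nth)
  show "\<exists>p<length l. p \<noteq> i \<and> l!p = v"
  proof (cases "p' < i")
    case True then show ?thesis using p' i by (intro exI[of _ p']) (auto simp: nth_del_nth)
  next
    case False then show ?thesis using p' i by (intro exI[of _ "Suc p'"]) (auto simp: nth_del_nth)
  qed
next
  assume "\<exists>p<length l. p \<noteq> i \<and> l!p = v"
  then obtain p where p: "p < length l" "p \<noteq> i" "l!p = v" by blast
  show "v \<in> set (del_nth i l)"
  proof (cases "p < i")
    case True
    then have "del_nth i l ! p = v" "p < length (del_nth i l)" using p i by (auto simp: nth_del_nth)
    then show ?thesis by (metis nth_mem)
  next
    case False
    then have "del_nth i l ! (p - 1) = v" "p - 1 < length (del_nth i l)" using p i by (auto simp: nth_del_nth)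
    then show ?thesis by (metis nth_mem)
  qed
qed

lemma del_nth_Cons_0: "del_nth 0 (a # xs) = xs"
  by (simp add: del_nth_def)

lemma del_nth_Cons_Suc: "del_nth (Suc i) (a # xs) = a # del_nth i xs"
  by (simp add: del_nth_def)

lemma set_del_nth_subset: "set (del_nth i l) \<subseteq> set l"
  unfolding del_nth_def using set_take_subset set_drop_subset by fastforce

lemma del_nth_not_Nil: "i < length l \<Longrightarrow> 2 \<le> length l \<Longrightarrow> del_nth i l \<noteq> []"
  by (metis One_nat_def Suc_1 Suc_le_lessD diff_is_0_eq length_del_nth list.size(3) not_less)

lemma swap_negates_move_front:
  fixes F :: "'a list \<Rightarrow> 'm::ring_1"
  assumes A: "swap_negates F"
  shows "i < length m \<Longrightarrow> F (m ! i # del_nth i m) = (-1) ^ i * F m"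
proof (induction i arbitrary: m)
  case 0
  then show ?case by (cases m) (auto simp: del_nth_def)
next
  case (Suc i)
  let ?m = "swap_adj i m"
  have "?m ! i = m ! Suc i" using Suc.prems by (simp add: swap_adj_def nth_list_update)
  moreover have "del_nth i ?m = del_nth (Suc i) m" by (rule del_nth_swap_adj[OF Suc.prems])
  ultimately have "F (m ! Suc i # del_nth (Suc i) m) = (-1) ^ i * F ?m"
    using Suc.IH[of ?m] Suc.prems by simp
  also have "F ?m = - F m" using A Suc.prems unfolding swap_negates_def by auto
  finally show ?case by simp
qed

definition supp :: "('x \<Rightarrow> 'f::zero) \<Rightarrow> 'x set" where
  "supp F = {x. F x \<noteq> 0}"

abbreviation finsupp :: "('x \<Rightarrow> 'f::zero) \<Rightarrow> bool" where
  "finsupp F \<equiv> finite (supp F)"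

text \<open>Only meaningful for finitely supported \<open>F\<close>: over an infinite support the sum is \<open>0\<close>.\<close>

definition lin_ext :: "('x \<Rightarrow> 'y \<Rightarrow> 'f::field) \<Rightarrow> ('x \<Rightarrow> 'f) \<Rightarrow> 'y \<Rightarrow> 'f" where
  "lin_ext T F = (\<lambda>y. \<Sum>x\<in>supp F. F x * T x y)"

definition kronecker :: "'x \<Rightarrow> 'x \<Rightarrow> 'f::zero_neq_one" where
  "kronecker x = (\<lambda>y. if y = x then 1 else 0)"

lemma supp_iff [simp]: "x \<in> supp F \<longleftrightarrow> F x \<noteq> 0"
  by (simp add: supp_def)

lemma supp_zero [simp]: "supp (\<lambda>_. 0) = {}"
  by (simp add: supp_def)

lemma supp_kronecker [simp]: "supp (kronecker x :: _ \<Rightarrow> 'f::zero_neq_one) = {x}"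
  by (auto simp: supp_def kronecker_def)

lemma supp_add: "supp (\<lambda>x. F x + G x :: 'g::monoid_add) \<subseteq> supp F \<union> supp G"
  by auto

lemma finsupp_smult: "finsupp c \<Longrightarrow> finsupp (\<lambda>x. a * c x :: 'f::field)"
  by (rule finite_subset[of _ "supp c"]) auto

lemma finsupp_sum:
  assumes "finite I" "\<And>i. i \<in> I \<Longrightarrow> finsupp (G i)"
  shows "finsupp (\<lambda>y. \<Sum>i\<in>I. G i y)"
proof -
  have "supp (\<lambda>y. \<Sum>i\<in>I. G i y) \<subseteq> (\<Union>i\<in>I. supp (G i))"
    by clarsimp (meson sum.neutral)
  then show ?thesis using assms by (meson finite_UN_I finite_subset)
qed

lemma lin_ext_superset:
  assumes "finite L" "supp F \<subseteq> L"
  shows "lin_ext T F y = (\<Sum>x\<in>L. F x * T x y)"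
  unfolding lin_ext_def using assms by (intro sum.mono_neutral_left) auto

lemma supp_lin_ext: "supp (lin_ext T F) \<subseteq> (\<Union>x\<in>supp F. supp (T x))"
proof
  fix y assume "y \<in> supp (lin_ext T F)"
  then obtain x where "x \<in> supp F" "F x * T x y \<noteq> 0"
    by (auto simp: lin_ext_def elim: sum.not_neutral_contains_not_neutral)
  then show "y \<in> (\<Union>x\<in>supp F. supp (T x))" by auto
qed

lemma finsupp_lin_ext:
  assumes "finsupp F" "\<And>x. x \<in> supp F \<Longrightarrow> finsupp (T x)"
  shows "finsupp (lin_ext T F)"
  using supp_lin_ext[of T F] assms by (meson finite_UN_I finite_subset)

lemma lin_ext_add:
  assumes "finsupp F" "finsupp G"
  shows "lin_ext T (\<lambda>x. F x + G x) = (\<lambda>y. lin_ext T F y + lin_ext T G y)"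
proof
  fix y
  let ?L = "supp F \<union> supp G"
  have "lin_ext T (\<lambda>x. F x + G x) y = (\<Sum>x\<in>?L. (F x + G x) * T x y)"
    by (rule lin_ext_superset) (use assms in auto)
  also have "\<dots> = (\<Sum>x\<in>?L. F x * T x y) + (\<Sum>x\<in>?L. G x * T x y)"
    by (simp add: distrib_right sum.distrib)
  also have "\<dots> = lin_ext T F y + lin_ext T G y"
    using assms lin_ext_superset[of ?L F T y] lin_ext_superset[of ?L G T y] by simp
  finally show "lin_ext T (\<lambda>x. F x + G x) y = lin_ext T F y + lin_ext T G y" .
qed

lemma lin_ext_smult: "lin_ext T (\<lambda>x. c * F x) = (\<lambda>y. c * lin_ext T F y)"
proof (cases "c = 0")
  case False
  then have "supp (\<lambda>x. c * F x) = supp F" by auto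
  then show ?thesis by (simp add: lin_ext_def sum_distrib_left mult.assoc)
qed (simp add: lin_ext_def supp_def)

lemma lin_ext_zero [simp]: "lin_ext T (\<lambda>x. 0) = (\<lambda>y. 0)"
  by (simp add: lin_ext_def)

lemma lin_ext_kronecker [simp]: "lin_ext T (kronecker x) = T x"
  by (rule ext) (simp add: lin_ext_def, simp add: kronecker_def)

lemma lin_ext_kronecker_id:
  assumes "finsupp F"
  shows "lin_ext kronecker F = F"
proof
  fix y
  show "lin_ext kronecker F y = F y"
  proof (cases "F y = 0")
    case True
    then show ?thesis by (auto simp: lin_ext_def kronecker_def intro!: sum.neutral)
  next
    case False
    then have "lin_ext kronecker F y = (\<Sum>x\<in>{y}. F x * kronecker x y)"
      unfolding lin_ext_def using assms
      by (intro sum.mono_neutral_right) (auto simp: kronecker_def)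
    then show ?thesis by (simp add: kronecker_def)
  qed
qed

lemma lin_ext_cong:
  assumes "\<And>x. x \<in> supp F \<Longrightarrow> T x = T' x"
  shows "lin_ext T F = lin_ext T' F"
  using assms by (simp add: lin_ext_def)

lemma lin_ext_kernel_add:
  "lin_ext (\<lambda>x y. T1 x y + T2 x y) F = (\<lambda>y. lin_ext T1 F y + lin_ext T2 F y)"
  by (simp add: lin_ext_def distrib_left sum.distrib)

lemma lin_ext_kernel_diff:
  "lin_ext (\<lambda>x y. T1 x y - T2 x y) F = (\<lambda>y. lin_ext T1 F y - lin_ext T2 F y)"
  by (simp add: lin_ext_def right_diff_distrib sum_subtractf)

lemma lin_ext_lin_ext:
  assumes "finsupp F" "\<And>x. x \<in> supp F \<Longrightarrow> finsupp (T1 x)"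
  shows "lin_ext T2 (lin_ext T1 F) = lin_ext (\<lambda>x. lin_ext T2 (T1 x)) F"
proof
  fix z
  let ?M = "\<Union>x\<in>supp F. supp (T1 x)"
  have fM: "finite ?M" using assms by auto
  have "lin_ext T2 (lin_ext T1 F) z = (\<Sum>m\<in>?M. lin_ext T1 F m * T2 m z)"
    by (rule lin_ext_superset[OF fM supp_lin_ext])
  also have "\<dots> = (\<Sum>m\<in>?M. \<Sum>x\<in>supp F. F x * T1 x m * T2 m z)"
    by (simp add: lin_ext_def sum_distrib_right)
  also have "\<dots> = (\<Sum>x\<in>supp F. \<Sum>m\<in>?M. F x * T1 x m * T2 m z)"
    by (rule sum.swap)
  also have "\<dots> = (\<Sum>x\<in>supp F. F x * lin_ext T2 (T1 x) z)"
  proof (rule sum.cong[OF refl])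
    fix x assume "x \<in> supp F"
    then have "lin_ext T2 (T1 x) z = (\<Sum>m\<in>?M. T1 x m * T2 m z)"
      by (intro lin_ext_superset[OF fM]) auto
    then show "(\<Sum>m\<in>?M. F x * T1 x m * T2 m z) = F x * lin_ext T2 (T1 x) z"
      by (simp add: sum_distrib_left mult.assoc)
  qed
  finally show "lin_ext T2 (lin_ext T1 F) z = lin_ext (\<lambda>x. lin_ext T2 (T1 x)) F z"
    by (simp add: lin_ext_def)
qed

lemma lin_ext_sum_smult:
  assumes "finite I" "\<And>i. i \<in> I \<Longrightarrow> finsupp (G i)"
  shows "lin_ext T (\<lambda>y. \<Sum>i\<in>I. c i * G i y) = (\<lambda>z. \<Sum>i\<in>I. c i * lin_ext T (G i) z)"
  using assms
proof (induction I rule: finite_induct)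
  case (insert i I)
  have "lin_ext T (\<lambda>y. \<Sum>j\<in>insert i I. c j * G j y)
      = lin_ext T (\<lambda>y. c i * G i y + (\<Sum>j\<in>I. c j * G j y))"
    using insert by simp
  also have "\<dots> = (\<lambda>z. c i * lin_ext T (G i) z + lin_ext T (\<lambda>y. \<Sum>j\<in>I. c j * G j y) z)"
    using insert by (simp add: lin_ext_add lin_ext_smult finsupp_smult finsupp_sum)
  finally show ?case using insert by simp
qed simp

lemma lin_ext_sum_kronecker:
  assumes "finite I"
  shows "lin_ext T (\<lambda>y. \<Sum>i\<in>I. c i * kronecker (m i) y) = (\<lambda>z. \<Sum>i\<in>I. c i * T (m i) z)"
  using lin_ext_sum_smult[OF assms, of "\<lambda>i. kronecker (m i)"] by simp

text \<open>Here a list \<open>l\<close> without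
  repetitions stands for the simplex \<open>sort l\<close> with sign \<open>(-1) ^ inversions l\<close>, a list with
  repetitions for \<open>0\<close>; \<open>orient\<close> rewrites a chain of arbitrary lists accordingly. This lets a
  vertex map act list by list (\<open>push_chain\<close>) before the result is re-sorted.\<close>

definition list_boundary :: "'a list \<Rightarrow> 'a list \<Rightarrow> 'f::field" where
  "list_boundary l = (if length l \<le> 1 then (\<lambda>_. 0)
     else (\<lambda>\<tau>. \<Sum>i<length l. (-1) ^ i * kronecker (del_nth i l) \<tau>))"

definition oriented :: "'a::linorder list \<Rightarrow> 'a list \<Rightarrow> 'f::field" where
  "oriented l = (\<lambda>\<sigma>. if distinct l \<and> \<sigma> = sort l then (-1)^(inversions l) else 0)"

definition orient :: "('a::linorder list \<Rightarrow> 'f::field) \<Rightarrow> 'a list \<Rightarrow> 'f" where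
  "orient F = lin_ext oriented F"

definition push_chain :: "('a \<Rightarrow> 'b) \<Rightarrow> ('a list \<Rightarrow> 'f::field) \<Rightarrow> 'b list \<Rightarrow> 'f" where
  "push_chain \<phi> F = lin_ext (\<lambda>l. kronecker (map \<phi> l)) F"

lemma finsupp_list_boundary: "finsupp (list_boundary l)"
proof (cases "length l \<le> 1")
  case True then show ?thesis by (simp add: list_boundary_def supp_def)
next
  case False
  then show ?thesis unfolding list_boundary_def
    by (simp, intro finsupp_sum) (auto simp: supp_def kronecker_def)
qed

lemma supp_oriented: "supp (oriented l) \<subseteq> {sort l}"
  by (auto simp: oriented_def supp_def split: if_splits)

lemma finsupp_oriented: "finsupp (oriented l)"
  using supp_oriented finite_subset by fastforce

lemma finsupp_orient: "finsupp F \<Longrightarrow> finsupp (orient F)"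
  unfolding orient_def by (rule finsupp_lin_ext) (auto intro: finsupp_oriented)

lemma finsupp_push_chain: "finsupp F \<Longrightarrow> finsupp (push_chain \<phi> F)"
  unfolding push_chain_def by (rule finsupp_lin_ext) auto

lemma list_boundary_eq:
  "list_boundary \<sigma> \<tau> =
     (if \<tau> = [] then 0 else (\<Sum>i<length \<sigma>. if del_nth i \<sigma> = \<tau> then (-1) ^ i else 0))"
proof (cases "length \<sigma> \<le> 1")
  case True
  show ?thesis
  proof (cases "length \<sigma> = 0")
    case True then show ?thesis by (simp add: list_boundary_def)
  next
    case False
    with True have "length \<sigma> = 1" by linarith
    then show ?thesis by (auto simp: list_boundary_def del_nth_def)
  qed
next
  case False
  show ?thesis
  proof (cases "\<tau> = []")
    case True
    have "\<And>i. i < length \<sigma> \<Longrightarrow> [] \<noteq> del_nth i \<sigma>" using False del_nth_not_Nil by fastforce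
    then show ?thesis using False True by (auto simp: list_boundary_def kronecker_def intro!: sum.neutral)
  next
    case nonempty: False
    then show ?thesis using False by (auto simp: list_boundary_def kronecker_def intro!: sum.cong)
  qed
qed

lemma bd_eq_lin_ext: "finsupp c \<Longrightarrow> bd c = lin_ext list_boundary c"
  unfolding bd_def lin_ext_def supp_def by (rule ext) (auto simp: list_boundary_eq sum_distrib_left)

lemma oriented_swap_negates: "swap_negates (\<lambda>l. oriented l \<sigma>)"
  unfolding swap_negates_def
proof (intro allI impI)
  fix l :: "'a list" and j assume j: "Suc j < length l"
  show "oriented (swap_adj j l) \<sigma> = - oriented l \<sigma>"
  proof (cases "distinct l")
    case False then show ?thesis by (simp add: oriented_def distinct_swap_adj[OF j])
  next
    case True
    then have ne: "l!j \<noteq> l!Suc j" using j by (simp add: nth_eq_iff_index_eq)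
    show ?thesis
    proof (cases "l!j < l!Suc j")
      case True
      then show ?thesis using inversions_swap_adj_less[OF j True] \<open>distinct l\<close>
        by (simp add: oriented_def distinct_swap_adj[OF j] sort_swap_adj[OF j])
    next
      case False
      with ne have "l!Suc j < l!j" by simp
      then show ?thesis using inversions_swap_adj_greater[OF j] \<open>distinct l\<close>
        by (simp add: oriented_def distinct_swap_adj[OF j] sort_swap_adj[OF j])
    qed
  qed
qed

lemma oriented_sorted: "sorted_wrt (<) l \<Longrightarrow> oriented l = kronecker l"
  by (auto simp: oriented_def kronecker_def inversions_sorted strict_sorted_iff sorted_sort_id)

lemma oriented_nondistinct: "\<not> distinct l \<Longrightarrow> oriented l = (\<lambda>_. 0)"
  by (simp add: oriented_def)

lemma oriented_eq:
  "oriented l = (if distinct l then (\<lambda>\<sigma>. (-1) ^ inversions l * kronecker (sort l) \<sigma>) else (\<lambda>_. 0))"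
  by (auto simp: oriented_def kronecker_def)

lemma orient_kronecker [simp]: "orient (kronecker l) = oriented l"
  by (simp add: orient_def)

lemma orient_zero [simp]: "orient (\<lambda>_. 0) = (\<lambda>_. 0)"
  by (simp add: orient_def)

lemma orient_smult: "orient (\<lambda>x. c * F x) = (\<lambda>y. c * orient F y)"
  by (simp add: orient_def lin_ext_smult)

lemma orient_list_boundary:
  "orient (list_boundary l) =
     (if length l \<le> 1 then (\<lambda>_. 0) else (\<lambda>\<tau>. \<Sum>i<length l. (-1) ^ i * oriented (del_nth i l) \<tau>))"
  by (simp add: orient_def list_boundary_def lin_ext_sum_kronecker)

lemma orient_list_boundary_swap_negates:
  fixes \<tau> :: "'a::linorder list"
  shows "swap_negates (\<lambda>l. orient (list_boundary l) \<tau> :: 'f::field)"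
  unfolding swap_negates_def
proof (intro allI impI)
  fix l :: "'a list" and j assume j: "Suc j < length l"
  let ?n = "length l"
  let ?t = "\<lambda>i. (-1) ^ i * oriented (del_nth i l) \<tau> :: 'f"
  define \<pi> where "\<pi> i = (if i = j then Suc j else if i = Suc j then j else i)" for i
  have sign_term: "(-1) ^ i * oriented (del_nth i (swap_adj j l)) \<tau> = - ?t (\<pi> i)" if i: "i < ?n" for i
  proof -
    have neg: "oriented (swap_adj j' l') \<tau> = - (oriented l' \<tau> :: 'f)" if "Suc j' < length l'" for j' l'
      using oriented_swap_negates that unfolding swap_negates_def by blast
    consider "i = j" | "i = Suc j" | "i < j" | "Suc j < i" by linarith
    then show ?thesis
    proof cases
      case 3
      then show ?thesis using j neg[of "j - 1" "del_nth i l"] by (simp add: \<pi>_def del_nth_swap_adj_less)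
    next
      case 4
      then show ?thesis using i neg[of j "del_nth i l"] by (simp add: \<pi>_def del_nth_swap_adj_greater)
    qed (use j in \<open>simp_all add: \<pi>_def del_nth_swap_adj del_nth_Suc_swap_adj\<close>)
  qed
  have "orient (list_boundary (swap_adj j l)) \<tau> = (\<Sum>i<?n. - ?t (\<pi> i))"
    using j by (simp add: orient_list_boundary sign_term)
  also have "\<dots> = - (\<Sum>i<?n. ?t (\<pi> i))"
    by (simp add: sum_negf)
  also have "(\<Sum>i<?n. ?t (\<pi> i)) = (\<Sum>i<?n. ?t i)"
    by (rule sum.reindex_bij_witness[where i=\<pi> and j=\<pi>]) (use j in \<open>auto simp: \<pi>_def\<close>)
  also have "(\<Sum>i<?n. ?t i) = orient (list_boundary l) \<tau>"
    using j by (simp add: orient_list_boundary)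
  finally show "orient (list_boundary (swap_adj j l)) \<tau> = - (orient (list_boundary l) \<tau> :: 'f)" .
qed

lemma orient_list_boundary_adj_dup_vanishes:
  fixes \<tau> :: "'a::linorder list"
  shows "adj_dup_vanishes (\<lambda>l. orient (list_boundary l) \<tau> :: 'f::field)"
  unfolding adj_dup_vanishes_def
proof (intro allI impI)
  fix l :: "'a list" and j assume a: "Suc j < length l \<and> l ! j = l ! Suc j"
  let ?t = "\<lambda>i. (-1) ^ i * oriented (del_nth i l) \<tau> :: 'f"
  have "orient (list_boundary l) \<tau> = (\<Sum>i<length l. ?t i)"
    using a by (simp add: orient_list_boundary)
  also have "\<dots> = (\<Sum>i\<in>{j, Suc j}. ?t i)"
  proof (rule sum.mono_neutral_right)
    show "\<forall>i\<in>{..<length l} - {j, Suc j}. ?t i = 0"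
      using a del_nth_adj_dup_not_distinct[of j l] by (auto simp: oriented_nondistinct)
  qed (use a in auto)
  also have "\<dots> = 0"
    using a del_nth_adj_dup[of j l] by simp
  finally show "orient (list_boundary l) \<tau> = (0 :: 'f)" .
qed

lemma supp_list_boundary:
  "supp (list_boundary m :: _ \<Rightarrow> 'f::field) \<subseteq> {del_nth i m | i. i < length m}"
proof
  fix \<tau> assume "\<tau> \<in> supp (list_boundary m :: _ \<Rightarrow> 'f)"
  then have "(\<Sum>i<length m. if del_nth i m = \<tau> then (-1) ^ i else 0) \<noteq> (0::'f)"
    unfolding list_boundary_eq by (cases "\<tau> = []") auto
  then obtain i where "i < length m" "del_nth i m = \<tau>"
    by (auto elim: sum.not_neutral_contains_not_neutral split: if_splits)
  then show "\<tau> \<in> {del_nth i m | i. i < length m}" by blast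
qed

lemma orient_sorted:
  assumes "finsupp F" "\<And>\<sigma>. \<sigma> \<in> supp F \<Longrightarrow> sorted_wrt (<) \<sigma>"
  shows "orient F = F"
proof -
  have "orient F = lin_ext kronecker F"
    unfolding orient_def by (rule lin_ext_cong) (use assms in \<open>auto simp: oriented_sorted\<close>)
  then show ?thesis using lin_ext_kronecker_id assms by simp
qed

lemma orient_list_boundary_sorted:
  assumes "sorted_wrt (<) m"
  shows "orient (list_boundary m) = (list_boundary m :: _ \<Rightarrow> 'f::field)"
proof (rule orient_sorted[OF finsupp_list_boundary])
  fix \<sigma> assume "\<sigma> \<in> supp (list_boundary m :: _ \<Rightarrow> 'f)"
  then obtain i where "\<sigma> = del_nth i m" using supp_list_boundary by blast
  then show "sorted_wrt (<) \<sigma>" using sorted_del_nth[OF assms] by simp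
qed

text \<open>By \<open>swap_negates_eq_sign_sort\<close> it suffices to check this on sorted lists.\<close>

lemma orient_list_boundary_eq_bd_oriented:
  "orient (list_boundary l) = (bd (oriented l) :: _ \<Rightarrow> 'f::field)"
proof
  fix \<tau>
  have A: "orient (list_boundary l) \<tau> = (if distinct l
      then (-1) ^ inversions l * orient (list_boundary (sort l)) \<tau> else (0 :: 'f))"
    by (rule swap_negates_eq_sign_sort[OF orient_list_boundary_swap_negates
          orient_list_boundary_adj_dup_vanishes])
  have "bd (oriented l) \<tau> = (lin_ext list_boundary (oriented l) \<tau> :: 'f)"
    by (simp add: bd_eq_lin_ext finsupp_oriented)
  also have "\<dots> = (if distinct l then (-1) ^ inversions l * list_boundary (sort l) \<tau> else 0)"
    by (simp add: oriented_eq lin_ext_smult)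
  also have "\<dots> = orient (list_boundary l) \<tau>"
    using A by (simp add: orient_list_boundary_sorted strict_sorted_iff)
  finally show "orient (list_boundary l) \<tau> = (bd (oriented l) \<tau> :: 'f)" by simp
qed

lemma bd_zero [simp]: "bd (\<lambda>_. 0 :: 'f::field) = (\<lambda>_. 0)"
  by (simp add: bd_eq_lin_ext)

lemma bd_orient: "finsupp F \<Longrightarrow> bd (orient F) = orient (bd F)"
proof -
  assume f: "finsupp F"
  have "bd (orient F) = lin_ext list_boundary (lin_ext oriented F)"
    using bd_eq_lin_ext[OF finsupp_orient[OF f]] by (simp add: orient_def)
  also have "\<dots> = lin_ext (\<lambda>l. lin_ext list_boundary (oriented l)) F"
    by (rule lin_ext_lin_ext[OF f finsupp_oriented])
  also have "\<dots> = lin_ext (\<lambda>l. orient (list_boundary l)) F"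
    by (simp add: orient_list_boundary_eq_bd_oriented bd_eq_lin_ext finsupp_oriented)
  also have "\<dots> = orient (bd F)"
    by (simp add: orient_def bd_eq_lin_ext f lin_ext_lin_ext finsupp_list_boundary)
  finally show ?thesis .
qed

lemma push_chain_kronecker [simp]: "push_chain \<phi> (kronecker l) = kronecker (map \<phi> l)"
  by (simp add: push_chain_def)

lemma push_chain_zero [simp]: "push_chain \<phi> (\<lambda>_. 0) = (\<lambda>_. 0)"
  by (simp add: push_chain_def)

lemma push_chain_smult: "push_chain \<phi> (\<lambda>x. c * F x) = (\<lambda>y. c * push_chain \<phi> F y)"
  by (simp add: push_chain_def lin_ext_smult)

lemma push_chain_list_boundary: "push_chain \<phi> (list_boundary l) = list_boundary (map \<phi> l)"
  by (auto simp: push_chain_def list_boundary_def lin_ext_sum_kronecker map_del_nth)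

lemma bd_push_chain: "finsupp F \<Longrightarrow> bd (push_chain \<phi> F) = push_chain \<phi> (bd F)"
proof -
  assume f: "finsupp F"
  have "bd (push_chain \<phi> F) = lin_ext list_boundary (lin_ext (\<lambda>l. kronecker (map \<phi> l)) F)"
    using bd_eq_lin_ext[OF finsupp_push_chain[OF f]] by (simp add: push_chain_def)
  also have "\<dots> = lin_ext (\<lambda>l. push_chain \<phi> (list_boundary l)) F"
    by (simp add: lin_ext_lin_ext[OF f] push_chain_list_boundary)
  also have "\<dots> = push_chain \<phi> (bd F)"
    by (simp add: push_chain_def bd_eq_lin_ext f lin_ext_lin_ext finsupp_list_boundary)
  finally show ?thesis .
qed

lemma map_swap_adj: "Suc j < length l \<Longrightarrow> map \<phi> (swap_adj j l) = swap_adj j (map \<phi> l)"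
  by (auto simp: swap_adj_def map_update)

lemma oriented_map_swap_negates: "swap_negates (\<lambda>l. oriented (map \<phi> l) \<tau> :: 'f::field)"
  using oriented_swap_negates[of \<tau>, where 'b='f]
  unfolding swap_negates_def by (simp add: map_swap_adj)

lemma oriented_map_adj_dup_vanishes: "adj_dup_vanishes (\<lambda>l. oriented (map \<phi> l) \<tau> :: 'f::field)"
  unfolding adj_dup_vanishes_def
proof (intro allI impI)
  fix l :: "'a list" and j assume "Suc j < length l \<and> l ! j = l ! Suc j"
  then have "\<not> distinct (map \<phi> l)" using adj_dup_not_distinct[of j "map \<phi> l"] by simp
  then show "oriented (map \<phi> l) \<tau> = (0 :: 'f)" by (simp add: oriented_def)
qed

lemma orient_push_chain_oriented:
  "orient (push_chain \<phi> (oriented l)) = (oriented (map \<phi> l) :: _ \<Rightarrow> 'f::field)"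
proof
  fix \<tau>
  have "oriented (map \<phi> l) \<tau> = (if distinct l
      then (-1) ^ inversions l * oriented (map \<phi> (sort l)) \<tau> else (0 :: 'f))"
    by (rule swap_negates_eq_sign_sort[OF oriented_map_swap_negates oriented_map_adj_dup_vanishes])
  then show "orient (push_chain \<phi> (oriented l)) \<tau> = (oriented (map \<phi> l) \<tau> :: 'f)"
    by (simp add: oriented_eq[of l] push_chain_smult orient_smult)
qed

lemma orient_push_chain_orient:
  assumes f: "finsupp F"
  shows "orient (push_chain \<phi> (orient F)) = orient (push_chain \<phi> F)"
proof -
  have "orient (push_chain \<phi> (orient F)) = lin_ext (\<lambda>l. orient (push_chain \<phi> (oriented l))) F"
    unfolding orient_def push_chain_def
    by (simp add: lin_ext_lin_ext[OF f] finsupp_oriented finsupp_lin_ext)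
  also have "\<dots> = lin_ext (\<lambda>l. orient (push_chain \<phi> (kronecker l))) F"
    by (simp add: orient_push_chain_oriented)
  also have "\<dots> = orient (push_chain \<phi> F)"
    unfolding orient_def push_chain_def by (simp add: lin_ext_lin_ext[OF f])
  finally show ?thesis .
qed

lemma push_chain_comp: "finsupp F \<Longrightarrow> push_chain \<psi> (push_chain \<phi> F) = push_chain (\<psi> \<circ> \<phi>) F"
proof -
  assume f: "finsupp F"
  have "push_chain \<psi> (push_chain \<phi> F)
      = lin_ext (\<lambda>l. lin_ext (\<lambda>m. kronecker (map \<psi> m)) (kronecker (map \<phi> l))) F"
    unfolding push_chain_def by (rule lin_ext_lin_ext[OF f]) simp
  also have "\<dots> = push_chain (\<psi> \<circ> \<phi>) F" by (simp add: push_chain_def)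
  finally show ?thesis .
qed

lemma push_chain_id: "finsupp F \<Longrightarrow> push_chain id F = F"
  unfolding push_chain_def by (simp add: lin_ext_kronecker_id)

lemma push_chain_cong:
  fixes F :: "'a list \<Rightarrow> 'f::field"
  assumes "\<And>l v. l \<in> supp F \<Longrightarrow> v \<in> set l \<Longrightarrow> \<phi> v = \<phi>' v"
  shows "push_chain \<phi> F = push_chain \<phi>' F"
  unfolding push_chain_def
proof (rule lin_ext_cong)
  fix l assume "l \<in> supp F"
  then have "map \<phi> l = map \<phi>' l" using assms by (intro map_cong) auto
  then show "kronecker (map \<phi> l) = (kronecker (map \<phi>' l) :: _ \<Rightarrow> 'f)" by (simp only:)
qed

lemma supp_orient:
  fixes F :: "'a::linorder list \<Rightarrow> 'f::field"
  shows "supp (orient F) \<subseteq> {sort l | l. l \<in> supp F \<and> distinct l}"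
proof
  fix \<sigma> assume "\<sigma> \<in> supp (orient F)"
  then have "\<sigma> \<in> supp (lin_ext oriented F)" by (simp add: orient_def)
  then have "\<sigma> \<in> (\<Union>l\<in>supp F. supp (oriented l :: _ \<Rightarrow> 'f))" by (rule subsetD[OF supp_lin_ext])
  then obtain l where l: "l \<in> supp F" "\<sigma> \<in> supp (oriented l :: _ \<Rightarrow> 'f)" by blast
  then have "(oriented l \<sigma> :: 'f) \<noteq> 0" by simp
  then have "distinct l" "\<sigma> = sort l" by (auto simp: oriented_def split: if_splits)
  then show "\<sigma> \<in> {sort l | l. l \<in> supp F \<and> distinct l}" using l(1) by blast
qed

lemma supp_push_chain:
  fixes F :: "'a list \<Rightarrow> 'f::field"
  shows "supp (push_chain \<phi> F) \<subseteq> map \<phi> ` supp F"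
proof
  fix \<tau> assume "\<tau> \<in> supp (push_chain \<phi> F)"
  then have "\<tau> \<in> supp (lin_ext (\<lambda>l. kronecker (map \<phi> l)) F)" by (simp add: push_chain_def)
  then have "\<tau> \<in> (\<Union>l\<in>supp F. supp (kronecker (map \<phi> l) :: _ \<Rightarrow> 'f))" by (rule subsetD[OF supp_lin_ext])
  then obtain l where l: "l \<in> supp F" "\<tau> \<in> supp (kronecker (map \<phi> l) :: _ \<Rightarrow> 'f)" by blast
  then show "\<tau> \<in> map \<phi> ` supp F" by auto
qed

lemma supp_bd:
  fixes F :: "'a list \<Rightarrow> 'f::field"
  assumes f: "finsupp F" shows "supp (bd F) \<subseteq> {del_nth i l | i l. l \<in> supp F \<and> i < length l}"
proof
  fix \<tau> assume "\<tau> \<in> supp (bd F)"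
  then have "\<tau> \<in> supp (lin_ext list_boundary F)" by (simp add: bd_eq_lin_ext[OF f])
  then have "\<tau> \<in> (\<Union>l\<in>supp F. supp (list_boundary l :: _ \<Rightarrow> 'f))" by (rule subsetD[OF supp_lin_ext])
  then obtain l where l: "l \<in> supp F" "\<tau> \<in> supp (list_boundary l :: _ \<Rightarrow> 'f)" by blast
  have "\<tau> \<in> {del_nth i l | i. i < length l}" using l(2) by (rule subsetD[OF supp_list_boundary])
  then show "\<tau> \<in> {del_nth i l | i l. l \<in> supp F \<and> i < length l}" using l(1) by blast
qed

section \<open>A chain homotopy between vertex maps differing at one vertex\<close>

text \<open>If \<open>f\<close> and \<open>g\<close> agree except at \<open>x\<close>, where \<open>f x = a\<close>, the cone with apex \<open>a\<close> over
  the \<open>g\<close>-image of every simplex containing \<open>x\<close> is a chain homotopy from \<open>f\<close> to \<open>g\<close>.\<close>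

definition cone_step :: "'a \<Rightarrow> 'b \<Rightarrow> ('a \<Rightarrow> 'b) \<Rightarrow> 'a list \<Rightarrow> 'b list \<Rightarrow> 'f::field" where
  "cone_step x a g l = (if x \<in> set l then kronecker (a # map g l) else (\<lambda>_. 0))"

definition cone_chain :: "'a \<Rightarrow> 'b \<Rightarrow> ('a \<Rightarrow> 'b) \<Rightarrow> ('a list \<Rightarrow> 'f::field) \<Rightarrow> 'b list \<Rightarrow> 'f" where
  "cone_chain x a g F = lin_ext (cone_step x a g) F"

lemma finsupp_cone_step: "finsupp (cone_step x a g l)"
  by (cases "x \<in> set l") (auto simp: cone_step_def)

lemma finsupp_cone_chain: "finsupp F \<Longrightarrow> finsupp (cone_chain x a g F)"
  unfolding cone_chain_def by (rule finsupp_lin_ext[OF _ finsupp_cone_step])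

lemma orient_cone_chain_list_boundary:
  "orient (cone_chain x a g (list_boundary l)) \<tau> = (\<Sum>i<length l. (-1) ^ i *
     (if x \<in> set (del_nth i l) then oriented (a # map g (del_nth i l)) \<tau> else 0 :: 'f::field))"
proof -
  have "cone_chain x a g (list_boundary l) =
      (\<lambda>\<tau>. \<Sum>i<length l. (-1) ^ i * (cone_step x a g (del_nth i l) \<tau> :: 'f))"
  proof (cases "length l \<le> 1")
    case True
    then have "l = [] \<or> length l = 1" by (cases l) auto
    then show ?thesis by (auto simp: cone_chain_def list_boundary_def cone_step_def del_nth_def)
  qed (simp add: cone_chain_def list_boundary_def lin_ext_sum_kronecker)
  then have "orient (cone_chain x a g (list_boundary l)) \<tau>
      = (\<Sum>i<length l. (-1) ^ i * orient (cone_step x a g (del_nth i l)) \<tau> :: 'f)"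
    by (simp add: orient_def lin_ext_sum_smult finsupp_cone_step)
  moreover have "orient (cone_step x a g m) \<tau>
      = (if x \<in> set m then oriented (a # map g m) \<tau> else 0 :: 'f)" for m
    by (simp add: cone_step_def)
  ultimately show ?thesis by (simp add: if_distrib)
qed

lemma orient_bd_cone_step:
  assumes "x \<in> set l"
  shows "orient (bd (cone_step x a g l)) \<tau> = oriented (map g l) \<tau>
           - (\<Sum>i<length l. (-1) ^ i * oriented (a # map g (del_nth i l)) \<tau> :: 'f::field)"
proof -
  have "bd (cone_step x a g l) = (list_boundary (a # map g l) :: _ \<Rightarrow> 'f)"
    using assms by (simp add: cone_step_def bd_eq_lin_ext)
  moreover have "length (a # map g l) = Suc (length l)" "\<not> length (a # map g l) \<le> 1"
    using assms by auto
  ultimately have "orient (bd (cone_step x a g l)) \<tau>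
      = (\<Sum>i<Suc (length l). (-1) ^ i * oriented (del_nth i (a # map g l)) \<tau> :: 'f)"
    by (simp only: orient_list_boundary if_False)
  also have "\<dots> = oriented (map g l) \<tau>
      + (\<Sum>i<length l. (-1) ^ Suc i * oriented (a # map g (del_nth i l)) \<tau>)"
    by (simp only: sum.lessThan_Suc_shift) (simp add: del_nth_Cons_0 del_nth_Cons_Suc map_del_nth)
  finally show ?thesis by (simp add: sum_negf)
qed

text \<open>The terms of \<open>orient (bd (cone_step x a g l))\<close> and \<open>orient (cone_chain x a g (list_boundary l))\<close>
  cancel except for the face opposite \<open>x\<close>, and that face is \<open>f\<close> applied to \<open>l\<close>.\<close>

lemma cone_face_opposite:
  fixes f g :: "'a \<Rightarrow> 'b::linorder"
  assumes "x \<in> set l" and fx: "f x = a" and fg: "\<And>y. y \<noteq> x \<Longrightarrow> f y = g y"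
  shows "(\<Sum>i<length l. (-1) ^ i *
           (if x \<in> set (del_nth i l) then 0 else oriented (a # map g (del_nth i l)) \<tau>))
         = (oriented (map f l) \<tau> :: 'f::field)"
proof -
  let ?n = "length l"
  from assms obtain i0 where i0: "i0 < ?n" "l ! i0 = x" by (auto simp: in_set_conv_nth)
  show ?thesis
  proof (cases "\<exists>q<?n. q \<noteq> i0 \<and> l ! q = x")
    case True
    then obtain q where q: "q < ?n" "q \<noteq> i0" "l ! q = x" by blast
    have "x \<in> set (del_nth i l)" if "i < ?n" for i
      using that i0 q in_set_del_nth by metis
    moreover have "\<not> distinct (map f l)"
      using i0 q by (simp add: distinct_conv_nth) (metis nth_map)
    ultimately show ?thesis by (simp add: oriented_nondistinct)
  next
    case False
    then have mem: "x \<in> set (del_nth i l) \<longleftrightarrow> i \<noteq> i0" if "i < ?n" for i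
      using that in_set_del_nth i0 by metis
    have "(\<Sum>i<?n. (-1) ^ i * (if x \<in> set (del_nth i l) then 0 else oriented (a # map g (del_nth i l)) \<tau>))
        = (-1) ^ i0 * (oriented (a # map g (del_nth i0 l)) \<tau> :: 'f)"
      by (subst sum.mono_neutral_right[where S="{i0}"]) (use i0 mem in auto)
    also have "map g (del_nth i0 l) = map f (del_nth i0 l)"
      using mem[OF i0(1)] by (intro map_cong refl fg[symmetric]) auto
    also have "a # map f (del_nth i0 l) = map f l ! i0 # del_nth i0 (map f l)"
      using fx i0 by (simp add: map_del_nth)
    also have "oriented \<dots> \<tau> = (-1) ^ i0 * (oriented (map f l) \<tau> :: 'f)"
      by (rule swap_negates_move_front[OF oriented_swap_negates]) (use i0 in simp)
    finally show ?thesis by (simp flip: power_add mult.assoc)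
  qed
qed

lemma cone_step_homotopy_list:
  fixes f g :: "'a \<Rightarrow> 'b::linorder"
  assumes fx: "f x = a" and fg: "\<And>y. y \<noteq> x \<Longrightarrow> f y = g y"
  shows "orient (bd (cone_step x a g l)) \<tau> + orient (cone_chain x a g (list_boundary l)) \<tau>
         = (oriented (map g l) \<tau> :: 'f::field) - oriented (map f l) \<tau>"
proof (cases "x \<in> set l")
  case False
  then have "x \<notin> set (del_nth i l)" if "i < length l" for i
    using that False set_del_nth_subset[of i l] by blast
  moreover have "map f l = map g l" by (rule map_cong[OF refl fg]) (use False in auto)
  ultimately show ?thesis
    using False by (simp add: orient_cone_chain_list_boundary cone_step_def bd_zero del: map_eq_conv)
next
  case True
  let ?E = "\<lambda>i. (oriented (a # map g (del_nth i l)) \<tau> :: 'f)"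
  let ?c = "\<lambda>i. x \<in> set (del_nth i l)"
  let ?S = "\<Sum>i<length l. (-1) ^ i * ?E i"
  let ?T = "\<Sum>i<length l. (-1) ^ i * (if ?c i then ?E i else 0)"
  have "?T - ?S = (\<Sum>i<length l. (-1) ^ i * (if ?c i then ?E i else 0) - (-1) ^ i * ?E i)"
    by (rule sum_subtractf[symmetric])
  also have "\<dots> = (\<Sum>i<length l. - ((-1) ^ i * (if ?c i then 0 else ?E i)))"
    by (rule sum.cong) auto
  also have "\<dots> = - oriented (map f l) \<tau>"
    using cone_face_opposite[where f=f and g=g, OF True fx fg] by (simp add: sum_negf)
  finally have TS: "?T - ?S = - oriented (map f l) \<tau>" .
  have "orient (bd (cone_step x a g l)) \<tau> + orient (cone_chain x a g (list_boundary l)) \<tau>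
      = oriented (map g l) \<tau> - ?S + ?T"
    by (simp only: orient_bd_cone_step[OF True] orient_cone_chain_list_boundary)
  also have "\<dots> = oriented (map g l) \<tau> + (?T - ?S)"
    by (simp only: diff_add_eq add_diff_eq)
  finally show ?thesis by (simp only: TS add_uminus_conv_diff)
qed

lemma orient_push_chain_eq: "finsupp F \<Longrightarrow> orient (push_chain h F) = lin_ext (\<lambda>l. oriented (map h l)) F"
  by (simp add: orient_def push_chain_def lin_ext_lin_ext)

lemma cone_chain_homotopy:
  fixes f g :: "'a \<Rightarrow> 'b::linorder" and F :: "'a list \<Rightarrow> 'f::field"
  assumes F: "finsupp F" and fx: "f x = a" and fg: "\<And>y. y \<noteq> x \<Longrightarrow> f y = g y"
  shows "orient (bd (cone_chain x a g F)) \<tau> + orient (cone_chain x a g (bd F)) \<tau>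
         = orient (push_chain g F) \<tau> - orient (push_chain f F) \<tau>"
proof -
  have fin_bd: "finsupp (bd (cone_step x a g l) :: _ \<Rightarrow> 'f)" for l
    by (simp add: bd_eq_lin_ext finsupp_cone_step finsupp_lin_ext finsupp_list_boundary)
  have fin_cone: "finsupp (cone_chain x a g (list_boundary l) :: _ \<Rightarrow> 'f)" for l
    by (simp add: finsupp_cone_chain finsupp_list_boundary)
  have "orient (bd (cone_chain x a g F))
      = lin_ext oriented (lin_ext list_boundary (lin_ext (cone_step x a g) F))"
    using bd_eq_lin_ext[OF finsupp_cone_chain[OF F, of x a g]] by (simp add: orient_def cone_chain_def)
  also have "\<dots> = lin_ext (\<lambda>l. orient (bd (cone_step x a g l))) F"
    using fin_bd by (simp add: lin_ext_lin_ext F finsupp_cone_step orient_def bd_eq_lin_ext)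
  finally have A: "orient (bd (cone_chain x a g F)) = lin_ext (\<lambda>l. orient (bd (cone_step x a g l))) F" .
  have "orient (cone_chain x a g (bd F))
      = lin_ext oriented (lin_ext (cone_step x a g) (lin_ext list_boundary F))"
    by (simp add: orient_def cone_chain_def bd_eq_lin_ext F)
  also have "\<dots> = lin_ext (\<lambda>l. orient (cone_chain x a g (list_boundary l))) F"
    using fin_cone by (simp add: lin_ext_lin_ext F finsupp_list_boundary orient_def cone_chain_def)
  finally have B: "orient (cone_chain x a g (bd F))
      = lin_ext (\<lambda>l. orient (cone_chain x a g (list_boundary l))) F" .
  have "orient (bd (cone_chain x a g F)) \<tau> + orient (cone_chain x a g (bd F)) \<tau>
      = lin_ext (\<lambda>l \<tau>. orient (bd (cone_step x a g l)) \<tau> + orient (cone_chain x a g (list_boundary l)) \<tau>) F \<tau>"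
    by (simp only: A B lin_ext_kernel_add)
  also have "\<dots> = lin_ext (\<lambda>l \<tau>. oriented (map g l) \<tau> - oriented (map f l) \<tau>) F \<tau>"
    by (simp add: cone_step_homotopy_list[where f=f and g=g and x=x and a=a, OF fx fg])
  also have "\<dots> = orient (push_chain g F) \<tau> - orient (push_chain f F) \<tau>"
    by (simp only: lin_ext_kernel_diff orient_push_chain_eq[OF F])
  finally show ?thesis .
qed

lemma cone_chain_homotopy_cycle:
  fixes f g :: "'a \<Rightarrow> 'b::linorder" and z :: "'a list \<Rightarrow> 'f::field"
  assumes z: "finsupp z" "bd z = (\<lambda>_. 0)" and fx: "f x = a" and fg: "\<And>y. y \<noteq> x \<Longrightarrow> f y = g y"
  shows "(\<lambda>\<tau>. orient (push_chain g z) \<tau> - orient (push_chain f z) \<tau>) = bd (orient (cone_chain x a g z))"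
proof
  fix \<tau>
  have "bd (orient (cone_chain x a g z)) \<tau>
      = orient (bd (cone_chain x a g z)) \<tau> + orient (cone_chain x a g (bd z)) \<tau>"
    using z by (simp add: bd_orient finsupp_cone_chain) (simp add: cone_chain_def)
  also have "\<dots> = orient (push_chain g z) \<tau> - orient (push_chain f z) \<tau>"
    by (rule cone_chain_homotopy[where f=f and g=g and x=x and a=a, OF z(1) fx fg])
  finally show "orient (push_chain g z) \<tau> - orient (push_chain f z) \<tau>
      = bd (orient (cone_chain x a g z)) \<tau>" by simp
qed

definition fun_subspace :: "('x \<Rightarrow> 'f::field) set \<Rightarrow> bool" where
  "fun_subspace B \<longleftrightarrow> (\<lambda>_. 0) \<in> B \<and> (\<forall>u\<in>B. \<forall>v\<in>B. (\<lambda>x. u x + v x) \<in> B) \<and> (\<forall>c. \<forall>u\<in>B. (\<lambda>x. c * u x) \<in> B)"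

definition coset :: "('x \<Rightarrow> 'f::field) set \<Rightarrow> ('x \<Rightarrow> 'f) \<Rightarrow> ('x \<Rightarrow> 'f) set" where
  "coset B z = (\<lambda>b \<sigma>. z \<sigma> + b \<sigma>) ` B"

lemma fun_subspace_zero: "fun_subspace B \<Longrightarrow> (\<lambda>_. 0) \<in> B"
  by (simp add: fun_subspace_def)

lemma fun_subspace_add: "fun_subspace B \<Longrightarrow> u \<in> B \<Longrightarrow> v \<in> B \<Longrightarrow> (\<lambda>x. u x + v x) \<in> B"
  by (simp add: fun_subspace_def)

lemma fun_subspace_smult: "fun_subspace B \<Longrightarrow> u \<in> B \<Longrightarrow> (\<lambda>x. c * u x) \<in> B"
  by (simp add: fun_subspace_def)

lemma fun_subspace_uminus: "fun_subspace B \<Longrightarrow> u \<in> B \<Longrightarrow> (\<lambda>x. - u x) \<in> B"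
  using fun_subspace_smult[of B u "-1"] by simp

lemma fun_subspace_diff: "fun_subspace B \<Longrightarrow> u \<in> B \<Longrightarrow> v \<in> B \<Longrightarrow> (\<lambda>x. u x - v x) \<in> B"
  using fun_subspace_add[of B u "\<lambda>x. - v x"] fun_subspace_uminus[of B v] by simp

lemma csumI: "a \<in> A \<Longrightarrow> a' \<in> A' \<Longrightarrow> w = (\<lambda>x. a x + a' x) \<Longrightarrow> w \<in> csum A A'"
  by (auto simp: csum_def)

lemma cosetI: "b \<in> B \<Longrightarrow> w = (\<lambda>\<sigma>. z \<sigma> + b \<sigma>) \<Longrightarrow> w \<in> coset B z"
  by (auto simp: coset_def)

lemma cscaleI: "a \<in> A \<Longrightarrow> w = (\<lambda>x. c * a x) \<Longrightarrow> w \<in> cscale c A"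
  by (auto simp: cscale_def)

lemma mem_coset: "fun_subspace B \<Longrightarrow> w \<in> coset B u \<longleftrightarrow> (\<lambda>x. w x - u x) \<in> B"
proof
  assume "w \<in> coset B u"
  then obtain b where "b \<in> B" "w = (\<lambda>\<sigma>. u \<sigma> + b \<sigma>)" by (auto simp: coset_def)
  then show "(\<lambda>x. w x - u x) \<in> B" by simp
next
  assume "(\<lambda>x. w x - u x) \<in> B"
  moreover have "w = (\<lambda>\<sigma>. u \<sigma> + (\<lambda>x. w x - u x) \<sigma>)" by simp
  ultimately show "w \<in> coset B u" by (rule cosetI)
qed

lemma coset_self: "fun_subspace B \<Longrightarrow> u \<in> coset B u"
  by (simp add: mem_coset fun_subspace_zero)

lemma coset_eq_iff:
  assumes B: "fun_subspace B"
  shows "coset B u = coset B v \<longleftrightarrow> (\<lambda>x. u x - v x) \<in> B"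
proof
  assume "coset B u = coset B v"
  then have "u \<in> coset B v" using coset_self[OF B, of u] by simp
  then show "(\<lambda>x. u x - v x) \<in> B" using mem_coset[OF B] by simp
next
  assume d: "(\<lambda>x. u x - v x) \<in> B"
  show "coset B u = coset B v"
  proof (rule set_eqI)
    fix w
    have "(\<lambda>x. w x - u x) \<in> B \<longleftrightarrow> (\<lambda>x. w x - v x) \<in> B"
    proof
      assume "(\<lambda>x. w x - u x) \<in> B"
      from fun_subspace_add[OF B this d] show "(\<lambda>x. w x - v x) \<in> B" by (simp add: algebra_simps)
    next
      assume "(\<lambda>x. w x - v x) \<in> B"
      from fun_subspace_diff[OF B this d] show "(\<lambda>x. w x - u x) \<in> B" by (simp add: algebra_simps)
    qed
    then show "w \<in> coset B u \<longleftrightarrow> w \<in> coset B v" by (simp add: mem_coset[OF B])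
  qed
qed

lemma csum_coset:
  assumes B: "fun_subspace B"
  shows "csum (coset B u) (coset B v) = coset B (\<lambda>x. u x + v x)"
proof (rule set_eqI)
  fix w
  show "w \<in> csum (coset B u) (coset B v) \<longleftrightarrow> w \<in> coset B (\<lambda>x. u x + v x)"
  proof
    assume "w \<in> csum (coset B u) (coset B v)"
    then obtain a a' where aa: "w = (\<lambda>x. a x + a' x)" "a \<in> coset B u" "a' \<in> coset B v"
      by (auto simp: csum_def)
    then have "(\<lambda>x. a x - u x) \<in> B" "(\<lambda>x. a' x - v x) \<in> B" by (auto simp: mem_coset[OF B])
    from fun_subspace_add[OF B this] show "w \<in> coset B (\<lambda>x. u x + v x)"
      using aa by (simp add: mem_coset[OF B] algebra_simps)
  next
    assume "w \<in> coset B (\<lambda>x. u x + v x)"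
    then have "(\<lambda>x. w x - v x) \<in> coset B u" by (simp add: mem_coset[OF B] algebra_simps)
    moreover have "v \<in> coset B v" by (rule coset_self[OF B])
    moreover have "w = (\<lambda>x. (w x - v x) + v x)" by simp
    ultimately show "w \<in> csum (coset B u) (coset B v)" by (rule csumI)
  qed
qed

lemma cscale_coset:
  assumes B: "fun_subspace B" and c: "c \<noteq> 0"
  shows "cscale c (coset B u) = coset B (\<lambda>x. c * u x)"
proof (rule set_eqI)
  fix w
  show "w \<in> cscale c (coset B u) \<longleftrightarrow> w \<in> coset B (\<lambda>x. c * u x)"
  proof
    assume "w \<in> cscale c (coset B u)"
    then obtain a where a: "a \<in> coset B u" "w = (\<lambda>x. c * a x)" by (auto simp: cscale_def)
    then have "(\<lambda>x. a x - u x) \<in> B" by (simp add: mem_coset[OF B])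
    from fun_subspace_smult[OF B this, of c] show "w \<in> coset B (\<lambda>x. c * u x)"
      using a by (simp add: mem_coset[OF B] algebra_simps)
  next
    assume "w \<in> coset B (\<lambda>x. c * u x)"
    then have "(\<lambda>x. w x - c * u x) \<in> B" by (simp add: mem_coset[OF B])
    from fun_subspace_smult[OF B this, of "inverse c"]
    have i: "(\<lambda>x. inverse c * (w x - c * u x)) \<in> B" by simp
    have "(\<lambda>x. inverse c * (w x - c * u x)) = (\<lambda>x. inverse c * w x - u x)"
      using c by (simp add: field_simps)
    with i have "(\<lambda>x. inverse c * w x - u x) \<in> B" by simp
    then have "(\<lambda>x. inverse c * w x) \<in> coset B u" by (simp add: mem_coset[OF B])
    moreover have "w = (\<lambda>x. c * (inverse c * w x))" using c by (simp add: mult.assoc[symmetric])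
    ultimately show "w \<in> cscale c (coset B u)" by (rule cscaleI)
  qed
qed

lemma csum_coset_superspace:
  assumes B: "fun_subspace B" and B': "fun_subspace B'" and sub: "B \<subseteq> B'"
  shows "csum (coset B u) B' = coset B' u"
proof (rule set_eqI)
  fix w
  show "w \<in> csum (coset B u) B' \<longleftrightarrow> w \<in> coset B' u"
  proof
    assume "w \<in> csum (coset B u) B'"
    then obtain a b where ab: "w = (\<lambda>x. a x + b x)" "a \<in> coset B u" "b \<in> B'" by (auto simp: csum_def)
    then have "(\<lambda>x. a x - u x) \<in> B'" using sub by (auto simp: mem_coset[OF B])
    from fun_subspace_add[OF B' this ab(3)] show "w \<in> coset B' u" using ab
      by (simp add: mem_coset[OF B'] algebra_simps)
  next
    assume "w \<in> coset B' u"
    then have "(\<lambda>x. w x - u x) \<in> B'" by (simp add: mem_coset[OF B'])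
    moreover have "u \<in> coset B u" by (rule coset_self[OF B])
    moreover have "w = (\<lambda>x. u x + (w x - u x))" by simp
    ultimately show "w \<in> csum (coset B u) B'" by (intro csumI[of u _ "\<lambda>x. w x - u x"]) auto
  qed
qed

lemma csum_image_coset:
  fixes L :: "('x \<Rightarrow> 'f::field) \<Rightarrow> ('y \<Rightarrow> 'f)"
  assumes B: "fun_subspace B" and B': "fun_subspace B'" and u: "finsupp u" and Bf: "\<And>b. b \<in> B \<Longrightarrow> finsupp b"
    and Ladd: "\<And>u v. finsupp u \<Longrightarrow> finsupp v \<Longrightarrow> L (\<lambda>x. u x + v x) = (\<lambda>x. L u x + L v x)"
    and LB: "\<And>b. b \<in> B \<Longrightarrow> L b \<in> B'"
  shows "csum (L ` coset B u) B' = coset B' (L u)"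
proof (rule set_eqI)
  fix w
  show "w \<in> csum (L ` coset B u) B' \<longleftrightarrow> w \<in> coset B' (L u)"
  proof
    assume "w \<in> csum (L ` coset B u) B'"
    then obtain a b where ab: "w = (\<lambda>x. L a x + b x)" "a \<in> coset B u" "b \<in> B'" by (auto simp: csum_def)
    then have d: "(\<lambda>x. a x - u x) \<in> B" by (simp add: mem_coset[OF B])
    have "a = (\<lambda>x. u x + (a x - u x))" by simp
    then have "L a = (\<lambda>x. L u x + L (\<lambda>x. a x - u x) x)" using Ladd[OF u Bf[OF d]] by metis
    moreover have "L (\<lambda>x. a x - u x) \<in> B'" using LB d by blast
    ultimately have "(\<lambda>x. L a x - L u x) \<in> B'" by simp
    from fun_subspace_add[OF B' this ab(3)] show "w \<in> coset B' (L u)" using ab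
      by (simp add: mem_coset[OF B'] algebra_simps)
  next
    assume "w \<in> coset B' (L u)"
    then have "(\<lambda>x. w x - L u x) \<in> B'" by (simp add: mem_coset[OF B'])
    moreover have "u \<in> coset B u" by (rule coset_self[OF B])
    ultimately show "w \<in> csum (L ` coset B u) B'" by (intro csumI[of "L u" _ "\<lambda>x. w x - L u x"]) auto
  qed
qed

lemma lin_map_cosets:
  fixes F :: "('x \<Rightarrow> 'f::field) set \<Rightarrow> ('y \<Rightarrow> 'f) set" and L :: "('x \<Rightarrow> 'f) \<Rightarrow> 'y \<Rightarrow> 'f"
  assumes B: "fun_subspace B" and B': "fun_subspace B'" and Z: "fun_subspace Z"
    and F: "\<And>z. z \<in> Z \<Longrightarrow> F (coset B z) = coset B' (L z)"
    and LZ: "\<And>z. z \<in> Z \<Longrightarrow> L z \<in> Z'"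
    and L_add: "\<And>u v. u \<in> Z \<Longrightarrow> v \<in> Z \<Longrightarrow> L (\<lambda>x. u x + v x) = (\<lambda>x. L u x + L v x)"
    and L_smult: "\<And>c u. u \<in> Z \<Longrightarrow> L (\<lambda>x. c * u x) = (\<lambda>x. c * L u x)"
  shows "lin_map F {coset B z | z. z \<in> Z} {coset B' z | z. z \<in> Z'}"
  unfolding lin_map_def
proof (intro conjI ballI allI impI)
  fix A assume "A \<in> {coset B z |z. z \<in> Z}"
  then obtain z where "A = coset B z" "z \<in> Z" by blast
  then show "F A \<in> {coset B' z |z. z \<in> Z'}" using F LZ by blast
next
  fix A A' assume "A \<in> {coset B z |z. z \<in> Z}" "A' \<in> {coset B z |z. z \<in> Z}"
  then obtain z z' where z: "A = coset B z" "z \<in> Z" "A' = coset B z'" "z' \<in> Z" by blast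
  have "F (csum A A') = coset B' (L (\<lambda>x. z x + z' x))"
    using z F fun_subspace_add[OF Z z(2) z(4)] by (simp add: csum_coset[OF B])
  then show "F (csum A A') = csum (F A) (F A')"
    using z F L_add by (simp add: csum_coset[OF B'])
next
  fix c :: 'f and A assume c: "c \<noteq> 0" and "A \<in> {coset B z |z. z \<in> Z}"
  then obtain z where z: "A = coset B z" "z \<in> Z" by blast
  have "F (cscale c A) = coset B' (L (\<lambda>x. c * z x))"
    using z F fun_subspace_smult[OF Z z(2)] by (simp add: cscale_coset[OF B c])
  then show "F (cscale c A) = cscale c (F A)"
    using z F L_smult by (simp add: cscale_coset[OF B' c])
qed

definition downward_closed :: "'a set set \<Rightarrow> bool" where
  "downward_closed K \<longleftrightarrow> (\<forall>\<sigma>\<in>K. \<forall>\<tau>. \<tau> \<subseteq> \<sigma> \<and> \<tau> \<noteq> {} \<longrightarrow> \<tau> \<in> K)"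

definition chain_map :: "('a::linorder \<Rightarrow> 'b::linorder) \<Rightarrow> ('a list \<Rightarrow> 'f::field) \<Rightarrow> 'b list \<Rightarrow> 'f" where
  "chain_map h z = orient (push_chain h z)"

lemma chainsD: "c \<in> chains k K \<Longrightarrow> c \<sigma> \<noteq> 0 \<Longrightarrow> sorted_wrt (<) \<sigma> \<and> length \<sigma> = Suc k \<and> set \<sigma> \<in> K"
  by (auto simp: chains_def oriented_simplices_def)

lemma chainsI: "(\<And>\<sigma>. c \<sigma> \<noteq> 0 \<Longrightarrow> sorted_wrt (<) \<sigma> \<and> length \<sigma> = Suc k \<and> set \<sigma> \<in> K) \<Longrightarrow> c \<in> chains k K"
  by (auto simp: chains_def oriented_simplices_def)

lemma finsupp_chains:
  assumes "finite S" "K \<subseteq> Pow S" "c \<in> chains k K"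
  shows "finsupp c"
proof -
  have "supp c \<subseteq> {xs. set xs \<subseteq> S \<and> length xs = Suc k}"
  proof
    fix l assume "l \<in> supp c"
    then have "c l \<noteq> 0" by simp
    from chainsD[OF assms(3) this] have "set l \<in> K" "length l = Suc k" by auto
    with assms(2) show "l \<in> {xs. set xs \<subseteq> S \<and> length xs = Suc k}" by auto
  qed
  then show ?thesis using finite_lists_length_eq[OF assms(1)] finite_subset by blast
qed

lemma chains_subspace: "fun_subspace (chains k K :: ('a::linorder list \<Rightarrow> 'f::field) set)"
  unfolding fun_subspace_def
proof (intro conjI ballI allI)
  show "(\<lambda>_. 0) \<in> (chains k K :: ('a list \<Rightarrow> 'f) set)" by (rule chainsI) simp
next
  fix u v :: "'a list \<Rightarrow> 'f" assume uv: "u \<in> chains k K" "v \<in> chains k K"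
  show "(\<lambda>x. u x + v x) \<in> chains k K"
  proof (rule chainsI)
    fix \<sigma> assume "u \<sigma> + v \<sigma> \<noteq> 0"
    then have "u \<sigma> \<noteq> 0 \<or> v \<sigma> \<noteq> 0" by auto
    then show "sorted_wrt (<) \<sigma> \<and> length \<sigma> = Suc k \<and> set \<sigma> \<in> K"
      using chainsD[OF uv(1)] chainsD[OF uv(2)] by blast
  qed
next
  fix c :: 'f and u :: "'a list \<Rightarrow> 'f" assume u: "u \<in> chains k K"
  show "(\<lambda>x. c * u x) \<in> chains k K"
  proof (rule chainsI)
    fix \<sigma> assume "c * u \<sigma> \<noteq> 0"
    then have "u \<sigma> \<noteq> 0" by auto
    then show "sorted_wrt (<) \<sigma> \<and> length \<sigma> = Suc k \<and> set \<sigma> \<in> K" using chainsD[OF u] by blast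
  qed
qed

lemma bd_add:
  assumes "finsupp c" "finsupp c'"
  shows "bd (\<lambda>x. c x + c' x) = (\<lambda>x. bd c x + bd c' x)"
proof -
  have f: "finsupp (\<lambda>x. c x + c' x)" by (rule finite_subset[OF supp_add]) (use assms in auto)
  show ?thesis using assms by (simp add: bd_eq_lin_ext f lin_ext_add)
qed

lemma bd_smult:
  assumes "finsupp c" shows "bd (\<lambda>x. a * c x) = (\<lambda>x. a * bd c x)"
  using assms by (simp add: bd_eq_lin_ext finsupp_smult lin_ext_smult)

lemma boundaries_subspace:
  assumes "finite S" "K \<subseteq> Pow S"
  shows "fun_subspace (boundaries k K :: ('a::linorder list \<Rightarrow> 'f::field) set)"
  unfolding fun_subspace_def boundaries_def
proof (intro conjI ballI allI)
  have "(\<lambda>_. 0) \<in> (chains (Suc k) K :: ('a list \<Rightarrow> 'f) set)" by (rule fun_subspace_zero[OF chains_subspace])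
  then show "(\<lambda>_. 0) \<in> bd ` (chains (Suc k) K :: ('a list \<Rightarrow> 'f) set)"
    by (rule image_eqI[rotated]) (simp add: bd_zero)
next
  fix u v :: "'a list \<Rightarrow> 'f" assume "u \<in> bd ` chains (Suc k) K" "v \<in> bd ` chains (Suc k) K"
  then obtain c c' where c: "c \<in> chains (Suc k) K" "c' \<in> chains (Suc k) K" "u = bd c" "v = bd c'" by blast
  have "finsupp c" "finsupp c'" using finsupp_chains[OF assms c(1)] finsupp_chains[OF assms c(2)] by auto
  then have "(\<lambda>x. u x + v x) = bd (\<lambda>x. c x + c' x)" using c by (simp add: bd_add)
  moreover have "(\<lambda>x. c x + c' x) \<in> chains (Suc k) K" using c chains_subspace fun_subspace_add by blast
  ultimately show "(\<lambda>x. u x + v x) \<in> bd ` chains (Suc k) K" by blast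
next
  fix a :: 'f and u :: "'a list \<Rightarrow> 'f" assume "u \<in> bd ` chains (Suc k) K"
  then obtain c where c: "c \<in> chains (Suc k) K" "u = bd c" by blast
  have "finsupp c" using finsupp_chains[OF assms c(1)] by auto
  then have "(\<lambda>x. a * u x) = bd (\<lambda>x. a * c x)" using c by (simp add: bd_smult)
  moreover have "(\<lambda>x. a * c x) \<in> chains (Suc k) K" using c chains_subspace fun_subspace_smult by blast
  ultimately show "(\<lambda>x. a * u x) \<in> bd ` chains (Suc k) K" by blast
qed

lemma bd_chains:
  fixes c :: "'a::linorder list \<Rightarrow> 'f::field"
  assumes S: "finite S" "K \<subseteq> Pow S" and K: "downward_closed K" and c: "c \<in> chains (Suc k) K"
  shows "bd c \<in> chains k K"
proof (rule chainsI)
  fix \<sigma> assume "bd c \<sigma> \<noteq> 0"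
  then have "\<sigma> \<in> supp (bd c)" by simp
  then obtain i l where il: "\<sigma> = del_nth i l" "l \<in> supp c" "i < length l"
    using supp_bd[OF finsupp_chains[OF S c]] by blast
  then have l: "sorted_wrt (<) l" "length l = Suc (Suc k)" "set l \<in> K" using chainsD[OF c] by auto
  have "sorted_wrt (<) \<sigma>" using il l sorted_del_nth by simp
  moreover have "length \<sigma> = Suc k" using il l by simp
  moreover have "set \<sigma> \<in> K"
  proof -
    have "set \<sigma> \<subseteq> set l" using il set_del_nth_subset by simp
    moreover have "set \<sigma> \<noteq> {}" using \<open>length \<sigma> = Suc k\<close> by auto
    ultimately show ?thesis using K l(3) unfolding downward_closed_def by blast
  qed
  ultimately show "sorted_wrt (<) \<sigma> \<and> length \<sigma> = Suc k \<and> set \<sigma> \<in> K" by simp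
qed

lemma boundaries_subset_chains:
  assumes "finite S" "K \<subseteq> Pow S" "downward_closed K"
  shows "boundaries k K \<subseteq> (chains k K :: ('a::linorder list \<Rightarrow> 'f::field) set)"
  unfolding boundaries_def using bd_chains[OF assms] by blast

lemma chains_mono: "K \<subseteq> K' \<Longrightarrow> chains k K \<subseteq> chains k K'"
  by (auto simp: chains_def oriented_simplices_def)

lemma boundaries_mono: "K \<subseteq> K' \<Longrightarrow> boundaries k K \<subseteq> boundaries k K'"
  unfolding boundaries_def using chains_mono by blast

lemma cycles_subspace:
  assumes "finite S" "K \<subseteq> Pow S"
  shows "fun_subspace (cycles k K :: ('a::linorder list \<Rightarrow> 'f::field) set)"
  unfolding fun_subspace_def cycles_def
proof (intro conjI ballI allI)
  show "(\<lambda>_. 0) \<in> {c \<in> chains k K. bd c = (\<lambda>_. 0 :: 'f)}"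
    using fun_subspace_zero[OF chains_subspace] bd_zero by auto
next
  fix u v :: "'a list \<Rightarrow> 'f" assume u: "u \<in> {c \<in> chains k K. bd c
      = (\<lambda>_. 0)}" and v: "v \<in> {c \<in> chains k K. bd c = (\<lambda>_. 0)}"
  have f: "finsupp u" "finsupp v" using u v finsupp_chains[OF assms] by auto
  show "(\<lambda>x. u x + v x) \<in> {c \<in> chains k K. bd c = (\<lambda>_. 0)}"
    using u v fun_subspace_add[OF chains_subspace] by (auto simp: bd_add[OF f])
next
  fix a :: 'f and u :: "'a list \<Rightarrow> 'f" assume u: "u \<in> {c \<in> chains k K. bd c = (\<lambda>_. 0)}"
  have f: "finsupp u" using u finsupp_chains[OF assms] by auto
  show "(\<lambda>x. a * u x) \<in> {c \<in> chains k K. bd c = (\<lambda>_. 0)}"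
    using u fun_subspace_smult[OF chains_subspace] by (auto simp: bd_smult[OF f])
qed

lemma homology_eq_cosets: "homology k K = {coset (boundaries k K) z | z. z \<in> cycles k K}"
  by (simp add: homology_def coset_def)

lemma chain_map_chains:
  fixes z :: "'a::linorder list \<Rightarrow> 'f::field" and h :: "'a \<Rightarrow> 'b::linorder"
  assumes z: "z \<in> chains k K" and h: "\<And>\<sigma>. \<sigma> \<in> K \<Longrightarrow> h ` \<sigma> \<in> K'"
  shows "chain_map h z \<in> chains k K'"
proof (rule chainsI)
  fix \<sigma> assume "chain_map h z \<sigma> \<noteq> 0"
  then have "\<sigma> \<in> supp (orient (push_chain h z))" by (simp add: chain_map_def)
  then obtain l where l: "\<sigma> = sort l" "l \<in> supp (push_chain h z)" "distinct l"
    using supp_orient by blast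
  then obtain l0 where l0: "l = map h l0" "l0 \<in> supp z" using supp_push_chain by blast
  then have l0p: "length l0 = Suc k" "set l0 \<in> K" using chainsD[OF z] by auto
  have "sorted_wrt (<) \<sigma>" using l by (simp add: strict_sorted_iff)
  moreover have "length \<sigma> = Suc k" using l l0 l0p by simp
  moreover have "set \<sigma> \<in> K'" using l l0 h[OF l0p(2)] by simp
  ultimately show "sorted_wrt (<) \<sigma> \<and> length \<sigma> = Suc k \<and> set \<sigma> \<in> K'" by simp
qed

lemma chain_map_add:
  fixes z z' :: "'a::linorder list \<Rightarrow> 'f::field" and h :: "'a \<Rightarrow> 'b::linorder"
  assumes "finsupp z" "finsupp z'"
  shows "chain_map h (\<lambda>x. z x + z' x) = (\<lambda>x. chain_map h z x + chain_map h z' x)"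
  using assms
    by (simp add: chain_map_def orient_def push_chain_def lin_ext_add finsupp_push_chain[unfolded push_chain_def])

lemma chain_map_smult:
  fixes z :: "'a::linorder list \<Rightarrow> 'f::field" and h :: "'a \<Rightarrow> 'b::linorder"
  shows "chain_map h (\<lambda>x. a * z x) = (\<lambda>x. a * chain_map h z x)"
  by (simp add: chain_map_def orient_def push_chain_def lin_ext_smult)

lemma chain_map_zero: "chain_map h (\<lambda>_::'a::linorder list. 0 :: 'f::field) = (\<lambda>_. 0)"
  by (simp add: chain_map_def orient_def push_chain_def)

lemma bd_chain_map:
  fixes z :: "'a::linorder list \<Rightarrow> 'f::field" and h :: "'a \<Rightarrow> 'b::linorder"
  assumes "finsupp z" shows "bd (chain_map h z) = chain_map h (bd z)"
  using assms by (simp add: chain_map_def bd_orient finsupp_push_chain bd_push_chain)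

lemma chain_map_cycles:
  fixes z :: "'a::linorder list \<Rightarrow> 'f::field" and h :: "'a \<Rightarrow> 'b::linorder"
  assumes S: "finite S" "K \<subseteq> Pow S" and z: "z \<in> cycles k K" and h: "\<And>\<sigma>. \<sigma> \<in> K \<Longrightarrow> h ` \<sigma> \<in> K'"
  shows "chain_map h z \<in> cycles k K'"
proof -
  have zc: "z \<in> chains k K" "bd z = (\<lambda>_. 0)" using z by (auto simp: cycles_def)
  have "bd (chain_map h z) = chain_map h (bd z)" by (rule bd_chain_map[OF finsupp_chains[OF S zc(1)]])
  then have "bd (chain_map h z) = (\<lambda>_. 0)" using zc chain_map_zero by simp
  then show ?thesis using chain_map_chains[OF zc(1) h] by (simp add: cycles_def)
qed

lemma chain_map_boundaries:
  fixes b :: "'a::linorder list \<Rightarrow> 'f::field" and h :: "'a \<Rightarrow> 'b::linorder"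
  assumes S: "finite S" "K \<subseteq> Pow S" and b: "b \<in> boundaries k K" and h: "\<And>\<sigma>. \<sigma> \<in> K \<Longrightarrow> h ` \<sigma> \<in> K'"
  shows "chain_map h b \<in> boundaries k K'"
proof -
  obtain c where c: "c \<in> chains (Suc k) K" "b = bd c" using b by (auto simp: boundaries_def)
  have e1: "bd (chain_map h c) = chain_map h (bd c)" by (rule bd_chain_map[OF finsupp_chains[OF S c(1)]])
  have "chain_map h b = bd (chain_map h c)" unfolding e1 c(2) ..
  moreover have "chain_map h c \<in> chains (Suc k) K'" by (rule chain_map_chains[OF c(1) h])
  ultimately show ?thesis by (simp add: boundaries_def)
qed

lemma chain_map_comp:
  fixes z :: "'a::linorder list \<Rightarrow> 'f::field" and h :: "'a \<Rightarrow> 'b::linorder" and g :: "'b \<Rightarrow> 'c::linorder"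
  assumes "finsupp z" shows "chain_map g (chain_map h z) = chain_map (g \<circ> h) z"
  using assms by (simp add: chain_map_def orient_push_chain_orient finsupp_push_chain push_chain_comp)

lemma chain_map_id_on:
  fixes z :: "'a::linorder list \<Rightarrow> 'f::field"
  assumes z: "finsupp z" and hv: "\<And>l v. l \<in> supp z \<Longrightarrow> v \<in> set l \<Longrightarrow> h v = v"
    and srt: "\<And>\<sigma>. \<sigma> \<in> supp z \<Longrightarrow> sorted_wrt (<) \<sigma>"
  shows "chain_map h z = z"
proof -
  have "push_chain h z = push_chain id z" by (rule push_chain_cong) (use hv in simp)
  then have "chain_map h z = orient z" using z by (simp add: chain_map_def push_chain_id)
  also have "orient z = z" by (rule orient_sorted[OF z srt])
  finally show ?thesis .
qed

section \<open>Contiguous simplicial maps induce the same map in homology\<close>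

lemma orient_cone_chain_chains:
  fixes z :: "'a::linorder list \<Rightarrow> 'f::field" and g :: "'a \<Rightarrow> 'a"
  assumes z: "z \<in> chains k K" and K'': "downward_closed K''"
    and cone: "\<And>\<sigma>. \<sigma> \<in> K \<Longrightarrow> x \<in> \<sigma> \<Longrightarrow> insert x (g ` \<sigma>) \<in> K''"
  shows "orient (cone_chain x x g z) \<in> chains (Suc k) K''"
proof (rule chainsI)
  fix \<sigma> assume "orient (cone_chain x x g z) \<sigma> \<noteq> 0"
  then have "\<sigma> \<in> supp (orient (cone_chain x x g z))" by simp
  then obtain l where l: "\<sigma> = sort l" "l \<in> supp (cone_chain x x g z)" "distinct l"
    using supp_orient by blast
  have \<sigma>: "sorted_wrt (<) \<sigma>" "length \<sigma> = length l" "set \<sigma> = set l"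
    using l by (simp_all add: strict_sorted_iff)
  have "l \<in> (\<Union>l0\<in>supp z. supp (cone_step x x g l0 :: _ \<Rightarrow> 'f))"
    using l(2) unfolding cone_chain_def by (rule subsetD[OF supp_lin_ext])
  then obtain l0 where l0: "l0 \<in> supp z" "x \<in> set l0" "l = x # map g l0"
    by (auto simp: cone_step_def kronecker_def split: if_splits)
  then have "length l0 = Suc k" "set l0 \<in> K" using chainsD[OF z] by auto
  then show "sorted_wrt (<) \<sigma> \<and> length \<sigma> = Suc (Suc k) \<and> set \<sigma> \<in> K''"
    using \<sigma> l0 cone by simp
qed

lemma chain_map_update_homologous:
  fixes z :: "'a::linorder list \<Rightarrow> 'f::field" and f g :: "'a \<Rightarrow> 'a"
  assumes S: "finite S" "K \<subseteq> Pow S" and K'': "downward_closed K''" and z: "z \<in> cycles k K"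
    and fx: "f x = x" and fg: "\<And>y. y \<noteq> x \<Longrightarrow> f y = g y"
    and cone: "\<And>\<sigma>. \<sigma> \<in> K \<Longrightarrow> x \<in> \<sigma> \<Longrightarrow> insert x (g ` \<sigma>) \<in> K''"
  shows "(\<lambda>\<tau>. chain_map g z \<tau> - chain_map f z \<tau>) \<in> boundaries k K''"
proof -
  have zc: "z \<in> chains k K" "bd z = (\<lambda>_. 0)" using z by (auto simp: cycles_def)
  have "(\<lambda>\<tau>. chain_map g z \<tau> - chain_map f z \<tau>) = bd (orient (cone_chain x x g z))"
    unfolding chain_map_def
    by (rule cone_chain_homotopy_cycle[where f=f and g=g and x=x and a=x,
          OF finsupp_chains[OF S zc(1)] zc(2) fx fg])
  moreover have "orient (cone_chain x x g z) \<in> chains (Suc k) K''"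
    by (rule orient_cone_chain_chains[OF zc(1) K'' cone])
  ultimately show ?thesis by (simp add: boundaries_def)
qed

text \<open>Move the vertices to their images under \<open>r\<close> one at a time; by contiguity every
  intermediate cone lies in \<open>K''\<close>.\<close>

lemma contiguous_chain_map_homologous:
  fixes z :: "'a::linorder list \<Rightarrow> 'f::field" and r :: "'a \<Rightarrow> 'a"
  assumes S: "finite S" "K \<subseteq> Pow S" "K'' \<subseteq> Pow S" and K'': "downward_closed K''"
    and z: "z \<in> cycles k K"
    and cont: "\<And>\<sigma>. \<sigma> \<in> K \<Longrightarrow> \<sigma> \<union> r ` \<sigma> \<in> K''"
  shows "(\<lambda>x. chain_map r z x - z x) \<in> boundaries k K''"
proof -
  have zc: "z \<in> chains k K" using z by (auto simp: cycles_def)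
  have B: "fun_subspace (boundaries k K'' :: ('a list \<Rightarrow> 'f) set)"
    by (rule boundaries_subspace[OF S(1,3)])
  define r_on where "r_on Fs y = (if y \<in> Fs then r y else y)" for Fs y
  have "(\<lambda>x. chain_map (r_on Fs) z x - z x) \<in> boundaries k K''" if "Fs \<subseteq> S" for Fs
    using finite_subset[OF that S(1)] that
  proof (induction Fs rule: finite_induct)
    case empty
    have "chain_map (r_on {}) z = z"
      by (rule chain_map_id_on[OF finsupp_chains[OF S(1,2) zc]]) (auto simp: r_on_def dest: chainsD[OF zc])
    then show ?case using fun_subspace_zero[OF B] by simp
  next
    case (insert x Fs)
    have "insert x (r_on (insert x Fs) ` \<sigma>) \<in> K''" if "\<sigma> \<in> K" "x \<in> \<sigma>" for \<sigma>
    proof -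
      have "insert x (r_on (insert x Fs) ` \<sigma>) \<subseteq> \<sigma> \<union> r ` \<sigma>" using that by (auto simp: r_on_def)
      then show ?thesis using cont[OF that(1)] K'' unfolding downward_closed_def by blast
    qed
    then have "(\<lambda>\<tau>. chain_map (r_on (insert x Fs)) z \<tau> - chain_map (r_on Fs) z \<tau>) \<in> boundaries k K''"
      using insert by (intro chain_map_update_homologous[OF S(1,2) K'' z]) (auto simp: r_on_def)
    from fun_subspace_add[OF B this insert.IH] insert.prems show ?case by simp
  qed
  moreover have "chain_map (r_on S) z = chain_map r z"
    unfolding chain_map_def using chainsD[OF zc] S(2)
    by (intro arg_cong[where f=orient] push_chain_cong) (auto simp: r_on_def)
  ultimately show ?thesis by fastforce
qed

lemma valid_dp_shift: "valid_dp p \<Longrightarrow> 0 \<le> \<epsilon> \<Longrightarrow> valid_dp (dp_shift \<epsilon> p)"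
  by (auto simp: valid_dp_def dp_shift_def split: prod.splits)

lemma dp_le_shift: "0 \<le> \<epsilon> \<Longrightarrow> dp_le p (dp_shift \<epsilon> p)"
  by (auto simp: dp_le_def dp_shift_def split: prod.splits)

lemma dp_shift_mono: "dp_le p q \<Longrightarrow> dp_le (dp_shift \<epsilon> p) (dp_shift \<epsilon> q)"
  by (auto simp: dp_le_def dp_shift_def split: prod.splits)

lemma dp_shift_shift: "dp_shift \<epsilon> (dp_shift \<epsilon> p) = dp_shift (2*\<epsilon>) p"
  by (auto simp: dp_shift_def split: prod.splits)

lemma dp_le_trans: "dp_le p q \<Longrightarrow> dp_le q r \<Longrightarrow> dp_le p r"
  by (auto simp: dp_le_def split: prod.splits)

lemma dp_shift_le_shift: "\<epsilon>0 \<le> \<eta> \<Longrightarrow> dp_le (dp_shift \<epsilon>0 q) (dp_shift \<eta> q)"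
  by (auto simp: dp_le_def dp_shift_def split: prod.splits)

lemma rips_lev_subset_Pow: "rips_lev d S p \<subseteq> Pow S"
  by (auto simp: rips_lev_def rips_def split: prod.splits)

lemma rips_lev_downward_closed: "downward_closed (rips_lev d S p)"
  unfolding downward_closed_def rips_lev_def rips_def
  by (auto split: prod.splits intro: finite_subset)

lemma Inf_image_interval_antimono:
  fixes D :: "real \<Rightarrow> real"
  assumes "\<And>t. 0 \<le> D t" "a \<le> b" "a' \<le> a" "b \<le> b'"
  shows "Inf (D ` {a'..b'}) \<le> Inf (D ` {a..b})"
proof (rule cInf_superset_mono)
  show "D ` {a..b} \<noteq> {}" using assms by auto
  show "bdd_below (D ` {a'..b'})" using assms(1) by (intro bdd_belowI[of _ 0]) auto
  show "D ` {a..b} \<subseteq> D ` {a'..b'}" using assms by auto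
qed

lemma Inf_interval_transfer:
  fixes D1 D2 :: "real \<Rightarrow> real"
  assumes H: "\<And>t. Inf (D2 ` {t-\<epsilon>..t+\<epsilon>}) \<le> D1 t + 2*\<epsilon>" and D2: "\<And>t. 0 \<le> D2 t"
    and ab: "a \<le> b" and e: "0 \<le> \<epsilon>"
  shows "Inf (D2 ` {a-\<epsilon>..b+\<epsilon>}) \<le> Inf (D1 ` {a..b}) + 2*\<epsilon>"
proof -
  have "Inf (D2 ` {a-\<epsilon>..b+\<epsilon>}) - 2*\<epsilon> \<le> Inf (D1 ` {a..b})"
  proof (rule cInf_greatest)
    show "D1 ` {a..b} \<noteq> {}" using ab by auto
  next
    fix x assume "x \<in> D1 ` {a..b}"
    then obtain t where t: "t \<in> {a..b}" "x = D1 t" by blast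
    have "Inf (D2 ` {a-\<epsilon>..b+\<epsilon>}) \<le> Inf (D2 ` {t-\<epsilon>..t+\<epsilon>})"
      by (rule Inf_image_interval_antimono) (use D2 t e in auto)
    also have "\<dots> \<le> D1 t + 2*\<epsilon>" by (rule H)
    finally show "Inf (D2 ` {a-\<epsilon>..b+\<epsilon>}) - 2*\<epsilon> \<le> x" using t by simp
  qed
  then show ?thesis by simp
qed

lemma dms_nonneg: "dms X d \<Longrightarrow> x \<in> X \<Longrightarrow> y \<in> X \<Longrightarrow> 0 \<le> d t x y"
  by (simp add: dms_def)

lemma rips_lev_memI:
  assumes "\<sigma> \<subseteq> S" "finite \<sigma>" "\<sigma> \<noteq> {}" "\<And>x y. x \<in> \<sigma> \<Longrightarrow> y \<in> \<sigma> \<Longrightarrow> int_dist d a b x y \<le> \<delta>"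
  shows "\<sigma> \<in> rips_lev d S (a, b, \<delta>)"
  using assms by (simp add: rips_lev_def rips_def)

lemma rips_lev_memD:
  assumes "\<sigma> \<in> rips_lev d S (a, b, \<delta>)"
  shows "\<sigma> \<subseteq> S" "finite \<sigma>" "\<sigma> \<noteq> {}" "\<And>x y. x \<in> \<sigma> \<Longrightarrow> y \<in> \<sigma> \<Longrightarrow> int_dist d a b x y \<le> \<delta>"
  using assms by (auto simp: rips_lev_def rips_def)

lemma int_dist_antimono:
  assumes nn: "\<And>t. 0 \<le> d t u v" and "a \<le> b" "a' \<le> a" "b \<le> b'"
  shows "int_dist d a' b' u v \<le> int_dist d a b u v"
  unfolding int_dist_def by (rule Inf_image_interval_antimono) (use assms in auto)

lemma rips_lev_mono:
  assumes d: "dms X d" and S: "S \<subseteq> X" and p: "valid_dp p" and q: "valid_dp q" and pq: "dp_le p q"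
  shows "rips_lev d S p \<subseteq> rips_lev d S q"
proof
  fix \<sigma> assume s: "\<sigma> \<in> rips_lev d S p"
  obtain a b \<delta> where pp: "p = (a, b, \<delta>)" by (cases p) auto
  obtain a' b' \<delta>' where qq: "q = (a', b', \<delta>')" by (cases q) auto
  have le: "a' \<le> a" "b \<le> b'" "\<delta> \<le> \<delta>'" "a \<le> b" using pq p by (auto simp: pp qq dp_le_def valid_dp_def)
  note m = rips_lev_memD[OF s[unfolded pp]]
  show "\<sigma> \<in> rips_lev d S q" unfolding qq
  proof (rule rips_lev_memI[OF m(1-3)])
    fix x y assume xy: "x \<in> \<sigma>" "y \<in> \<sigma>"
    have "int_dist d a' b' x y \<le> int_dist d a b x y"
    proof (rule int_dist_antimono)
      show "\<And>t. 0 \<le> d t x y" using xy m(1) S dms_nonneg[OF d] by blast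
    qed (use le in auto)
    also have "\<dots> \<le> \<delta>" by (rule m(4)[OF xy])
    finally show "int_dist d a' b' x y \<le> \<delta>'" using le by simp
  qed
qed

lemma int_dist_transfer:
  assumes H: "\<And>t. Inf ((\<lambda>t'. d2 t' u' v') ` {t-\<epsilon>..t+\<epsilon>}) \<le> d1 t u v + 2*\<epsilon>"
    and nn: "\<And>t. 0 \<le> d2 t u' v'" and ab: "a \<le> b" and e: "0 \<le> \<epsilon>"
  shows "int_dist d2 (a-\<epsilon>) (b+\<epsilon>) u' v' \<le> int_dist d1 a b u v + 2*\<epsilon>"
  unfolding int_dist_def using Inf_interval_transfer[of "\<lambda>t. d2 t u' v'" \<epsilon> "\<lambda>t. d1 t u v", OF H nn ab e] .

section \<open>Simplicial maps between Rips filtrations induce interleavings\<close>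

definition induced_map :: "nat \<Rightarrow> real \<Rightarrow> ('a::linorder \<Rightarrow> 'b::linorder) \<Rightarrow> (real \<Rightarrow> 'b \<Rightarrow> 'b \<Rightarrow> real) \<Rightarrow> 'b set
   \<Rightarrow> dynp \<Rightarrow> ('a list \<Rightarrow> 'f::field) set \<Rightarrow> ('b list \<Rightarrow> 'f) set" where
  "induced_map k \<epsilon> h dY T p A = csum (chain_map h ` A) (boundaries k (rips_lev dY T (dp_shift \<epsilon> p)))"

locale shifted_simplicial_map =
  fixes k :: nat and \<epsilon> :: real and h :: "'a::linorder \<Rightarrow> 'b::linorder"
    and dX :: "real \<Rightarrow> 'a \<Rightarrow> 'a \<Rightarrow> real" and S :: "'a set"
    and dY :: "real \<Rightarrow> 'b \<Rightarrow> 'b \<Rightarrow> real" and T :: "'b set"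
  assumes S: "finite S" and T: "finite T" and eps: "0 \<le> \<epsilon>"
    and simplicial: "\<And>p \<sigma>. valid_dp p \<Longrightarrow> \<sigma> \<in> rips_lev dX S p \<Longrightarrow> h ` \<sigma> \<in> rips_lev dY T (dp_shift \<epsilon> p)"
    and monoX: "\<And>p q. valid_dp p \<Longrightarrow> valid_dp q \<Longrightarrow> dp_le p q \<Longrightarrow> rips_lev dX S p \<subseteq> rips_lev dX S q"
    and monoY: "\<And>p q. valid_dp p \<Longrightarrow> valid_dp q \<Longrightarrow> dp_le p q \<Longrightarrow> rips_lev dY T p \<subseteq> rips_lev dY T q"
begin

abbreviation BX :: "dynp \<Rightarrow> ('a list \<Rightarrow> 'f::field) set" where
  "BX p \<equiv> boundaries k (rips_lev dX S p)"

abbreviation BY :: "dynp \<Rightarrow> ('b list \<Rightarrow> 'f::field) set" where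
  "BY p \<equiv> boundaries k (rips_lev dY T p)"

lemma BX_subspace: "fun_subspace (BX p :: ('a list \<Rightarrow> 'f::field) set)"
  by (rule boundaries_subspace[OF S rips_lev_subset_Pow])

lemma BY_subspace: "fun_subspace (BY p :: ('b list \<Rightarrow> 'f::field) set)"
  by (rule boundaries_subspace[OF T rips_lev_subset_Pow])

lemma finsupp_chainsX: "c \<in> chains k' (rips_lev dX S p) \<Longrightarrow> finsupp c"
  by (rule finsupp_chains[OF S rips_lev_subset_Pow])

lemma finsupp_BX: "b \<in> (BX p :: ('a list \<Rightarrow> 'f::field) set) \<Longrightarrow> finsupp b"
  using boundaries_subset_chains[OF S rips_lev_subset_Pow rips_lev_downward_closed] finsupp_chainsX by blast

lemma induced_map_coset:
  assumes p: "valid_dp p" and z: "z \<in> (cycles k (rips_lev dX S p) :: ('a list \<Rightarrow> 'f::field) set)"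
  shows "induced_map k \<epsilon> h dY T p (coset (BX p) z) = coset (BY (dp_shift \<epsilon> p)) (chain_map h z)"
  unfolding induced_map_def
proof (rule csum_image_coset[OF BX_subspace BY_subspace])
  have "z \<in> chains k (rips_lev dX S p)" using z by (simp add: cycles_def)
  then show "finsupp z" by (rule finsupp_chainsX)
  show "\<And>b. b \<in> BX p \<Longrightarrow> finsupp b" by (rule finsupp_BX)
  show "\<And>u v. finsupp u \<Longrightarrow> finsupp v \<Longrightarrow> chain_map h (\<lambda>x. u x + v x) = (\<lambda>x. chain_map h u x + chain_map h v x)"
    by (rule chain_map_add)
  show "\<And>b. b \<in> BX p \<Longrightarrow> chain_map h b \<in> BY (dp_shift \<epsilon> p)"
    by (rule chain_map_boundaries[OF S rips_lev_subset_Pow]) (auto intro: simplicial[OF p])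
qed

lemma chain_map_cycles_shifted:
  assumes p: "valid_dp p" and z: "z \<in> (cycles k (rips_lev dX S p) :: ('a list \<Rightarrow> 'f::field) set)"
  shows "chain_map h z \<in> cycles k (rips_lev dY T (dp_shift \<epsilon> p))"
  by (rule chain_map_cycles[OF S rips_lev_subset_Pow z]) (rule simplicial[OF p])

lemma induced_map_linear:
  assumes p: "valid_dp p"
  shows "lin_map (induced_map k \<epsilon> h dY T p) (homology k (rips_lev dX S p) :: ('a list \<Rightarrow> 'f::field) set set)
          (homology k (rips_lev dY T (dp_shift \<epsilon> p)))"
  unfolding homology_eq_cosets
proof (rule lin_map_cosets[where L="chain_map h"])
  show "fun_subspace (BX p :: ('a list \<Rightarrow> 'f) set)" "fun_subspace (BY (dp_shift \<epsilon> p) :: ('b list \<Rightarrow> 'f) set)"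
    "fun_subspace (cycles k (rips_lev dX S p) :: ('a list \<Rightarrow> 'f) set)"
    by (rule BX_subspace BY_subspace cycles_subspace[OF S rips_lev_subset_Pow])+
  show "induced_map k \<epsilon> h dY T p (coset (BX p) z) = coset (BY (dp_shift \<epsilon> p)) (chain_map h z)"
    "chain_map h z \<in> cycles k (rips_lev dY T (dp_shift \<epsilon> p))"
    if "z \<in> (cycles k (rips_lev dX S p) :: ('a list \<Rightarrow> 'f) set)" for z
    using that by (rule induced_map_coset[OF p] chain_map_cycles_shifted[OF p])+
  have "finsupp u" if "u \<in> (cycles k (rips_lev dX S p) :: ('a list \<Rightarrow> 'f) set)" for u
    using that by (auto simp: cycles_def intro: finsupp_chainsX)
  then show "chain_map h (\<lambda>x. u x + v x) = (\<lambda>x. chain_map h u x + chain_map h v x)"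
    if "u \<in> cycles k (rips_lev dX S p)" "v \<in> cycles k (rips_lev dX S p)" for u v :: "'a list \<Rightarrow> 'f"
    using that by (simp add: chain_map_add)
  show "chain_map h (\<lambda>x. c * u x) = (\<lambda>x. c * chain_map h u x)" for c and u :: "'a list \<Rightarrow> 'f"
    by (rule chain_map_smult)
qed

lemma induced_map_natural:
  assumes p: "valid_dp p" and q: "valid_dp q" and pq: "dp_le p q"
    and A: "A \<in> (homology k (rips_lev dX S p) :: ('a list \<Rightarrow> 'f::field) set set)"
  shows "induced_map k \<epsilon> h dY T q (csum A (BX q)) = csum (induced_map k \<epsilon> h dY T p A) (BY (dp_shift \<epsilon> q))"
proof -
  obtain z where z: "A = coset (BX p) z" "z \<in> cycles k (rips_lev dX S p)" using A
    by (auto simp: homology_eq_cosets)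
  have sX: "BX p \<subseteq> (BX q :: ('a list \<Rightarrow> 'f) set)"
    by (rule boundaries_mono[OF monoX[OF p q pq]])
  have sY: "BY (dp_shift \<epsilon> p) \<subseteq> (BY (dp_shift \<epsilon> q) :: ('b list \<Rightarrow> 'f) set)"
    by (rule boundaries_mono[OF monoY[OF valid_dp_shift[OF p eps] valid_dp_shift[OF q eps]
          dp_shift_mono[OF pq]]])
  have zq: "z \<in> cycles k (rips_lev dX S q)"
    using z(2) chains_mono[OF monoX[OF p q pq]] by (auto simp: cycles_def)
  have "induced_map k \<epsilon> h dY T q (csum A (BX q)) = induced_map k \<epsilon> h dY T q (coset (BX q) z)"
    using z by (simp add: csum_coset_superspace[OF BX_subspace BX_subspace sX])
  also have "\<dots> = coset (BY (dp_shift \<epsilon> q)) (chain_map h z)" by (rule induced_map_coset[OF q zq])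
  also have "\<dots> = csum (coset (BY (dp_shift \<epsilon> p)) (chain_map h z)) (BY (dp_shift \<epsilon> q))"
    by (rule csum_coset_superspace[OF BY_subspace BY_subspace sY, symmetric])
  also have "\<dots> = csum (induced_map k \<epsilon> h dY T p A) (BY (dp_shift \<epsilon> q))"
    using z induced_map_coset[OF p z(2)] by simp
  finally show ?thesis .
qed

lemma induced_map_shifted_morph:
  "shifted_morph \<epsilon> (induced_map k \<epsilon> h dY T) (hom_module k dX S :: ('a list, 'f::field) dmod)
     (hom_module k dY T)"
  unfolding shifted_morph_def hom_module_def fst_conv snd_conv
  using induced_map_linear induced_map_natural by blast

end

lemma induced_map_induced_map:
  fixes h :: "'a::linorder \<Rightarrow> 'b::linorder" and h' :: "'b \<Rightarrow> 'a"
  assumes F: "shifted_simplicial_map \<epsilon> h dX S dY T" and G: "shifted_simplicial_map \<epsilon> h' dY T dX S"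
    and p: "valid_dp p" and A: "A \<in> (homology k (rips_lev dX S p) :: ('a list \<Rightarrow> 'f::field) set set)"
    and homologous: "\<And>z. z \<in> (cycles k (rips_lev dX S p) :: ('a list \<Rightarrow> 'f) set) \<Longrightarrow>
      (\<lambda>x. chain_map (h' \<circ> h) z x - z x) \<in> boundaries k (rips_lev dX S (dp_shift (2 * \<epsilon>) p))"
  shows "induced_map k \<epsilon> h' dX S (dp_shift \<epsilon> p) (induced_map k \<epsilon> h dY T p A)
         = csum A (boundaries k (rips_lev dX S (dp_shift (2 * \<epsilon>) p)))"
proof -
  interpret F: shifted_simplicial_map k \<epsilon> h dX S dY T by (rule F)
  interpret G: shifted_simplicial_map k \<epsilon> h' dY T dX S by (rule G)
  obtain z where z: "A = coset (F.BX p) z" "z \<in> cycles k (rips_lev dX S p)"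
    using A by (auto simp: homology_eq_cosets)
  have fz: "finsupp z" using z(2) by (auto simp: cycles_def intro: F.finsupp_chainsX)
  have p2: "valid_dp (dp_shift (2 * \<epsilon>) p)" "dp_le p (dp_shift (2 * \<epsilon>) p)"
    using valid_dp_shift[OF p, of "2 * \<epsilon>"] dp_le_shift[of "2 * \<epsilon>" p] F.eps by simp_all
  have "induced_map k \<epsilon> h' dX S (dp_shift \<epsilon> p) (induced_map k \<epsilon> h dY T p A)
      = coset (F.BX (dp_shift \<epsilon> (dp_shift \<epsilon> p))) (chain_map h' (chain_map h z))"
    using z F.induced_map_coset[OF p z(2)]
      G.induced_map_coset[OF valid_dp_shift[OF p F.eps] F.chain_map_cycles_shifted[OF p z(2)]]
    by simp
  also have "\<dots> = coset (F.BX (dp_shift (2 * \<epsilon>) p)) (chain_map (h' \<circ> h) z)"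
    by (simp add: dp_shift_shift chain_map_comp[OF fz])
  also have "\<dots> = coset (F.BX (dp_shift (2 * \<epsilon>) p)) z"
    using homologous[OF z(2)] by (simp add: coset_eq_iff[OF F.BX_subspace])
  also have "\<dots> = csum A (F.BX (dp_shift (2 * \<epsilon>) p))"
    unfolding z(1)
    by (rule csum_coset_superspace[OF F.BX_subspace F.BX_subspace boundaries_mono[OF F.monoX[OF p p2]],
          symmetric])
  finally show ?thesis .
qed

lemma interleaved_hom_modules:
  fixes \<psi> :: "'a::linorder \<Rightarrow> 'b::linorder" and \<psi>' :: "'b \<Rightarrow> 'a"
  assumes A1: "shifted_simplicial_map \<epsilon> \<psi> dX S dY T" and A2: "shifted_simplicial_map \<epsilon> \<psi>' dY T dX S"
    and cont: "\<And>p \<sigma>. valid_dp p \<Longrightarrow> \<sigma> \<in> rips_lev dX S p \<Longrightarrow>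
      \<sigma> \<union> \<psi>' ` \<psi> ` \<sigma> \<in> rips_lev dX S (dp_shift (2 * \<epsilon>) p)"
    and ret: "\<And>y. y \<in> T \<Longrightarrow> \<psi> (\<psi>' y) = y"
  shows "interleaved \<epsilon> (hom_module k dX S :: ('a list, 'f::field) dmod) (hom_module k dY T)"
proof -
  interpret F: shifted_simplicial_map k \<epsilon> \<psi> dX S dY T by (rule A1)
  interpret G: shifted_simplicial_map k \<epsilon> \<psi>' dY T dX S by (rule A2)
  have XYX: "(\<lambda>x. chain_map (\<psi>' \<circ> \<psi>) z x - z x) \<in> boundaries k (rips_lev dX S (dp_shift (2 * \<epsilon>) p))"
    if "valid_dp p" "z \<in> (cycles k (rips_lev dX S p) :: ('a list \<Rightarrow> 'f) set)" for p z
    by (rule contiguous_chain_map_homologous[OF F.S rips_lev_subset_Pow rips_lev_subset_Pow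
          rips_lev_downward_closed that(2)])
       (metis cont[OF that(1)] image_comp)
  have YXY: "(\<lambda>x. chain_map (\<psi> \<circ> \<psi>') w x - w x) \<in> boundaries k (rips_lev dY T (dp_shift (2 * \<epsilon>) p))"
    if "w \<in> (cycles k (rips_lev dY T p) :: ('b list \<Rightarrow> 'f) set)" for p w
  proof -
    have w: "w \<in> chains k (rips_lev dY T p)" using that by (simp add: cycles_def)
    have "chain_map (\<psi> \<circ> \<psi>') w = w"
      using chainsD[OF w] rips_lev_subset_Pow[of dY T p] ret
      by (intro chain_map_id_on[OF G.finsupp_chainsX[OF w]]) fastforce+
    then show ?thesis using fun_subspace_zero[OF F.BY_subspace] by simp
  qed
  show ?thesis
    unfolding interleaved_def
  proof (intro exI conjI allI impI ballI)
    show "shifted_morph \<epsilon> (induced_map k \<epsilon> \<psi> dY T) (hom_module k dX S :: ('a list, 'f) dmod)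
        (hom_module k dY T)"
      "shifted_morph \<epsilon> (induced_map k \<epsilon> \<psi>' dX S) (hom_module k dY T :: ('b list, 'f) dmod)
        (hom_module k dX S)"
      by (rule F.induced_map_shifted_morph G.induced_map_shifted_morph)+
  qed (simp_all add: hom_module_def induced_map_induced_map[OF A1 A2 _ _ XYX]
      induced_map_induced_map[OF A2 A1 _ _ YXY])
qed

lemma interleaved_sym: "interleaved \<epsilon> V W \<Longrightarrow> interleaved \<epsilon> W V"
  unfolding interleaved_def by blast

section \<open>From tripods to interleavings\<close>

definition eps_related ::
  "real \<Rightarrow> (real \<Rightarrow> 'a \<Rightarrow> 'a \<Rightarrow> real) \<Rightarrow> (real \<Rightarrow> 'b \<Rightarrow> 'b \<Rightarrow> real) \<Rightarrow> 'a \<Rightarrow> 'a \<Rightarrow> 'b \<Rightarrow> 'b \<Rightarrow> bool"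
  where "eps_related \<epsilon> d1 d2 x x' y y' \<longleftrightarrow>
    (\<forall>t. Inf ((\<lambda>t'. d2 t' y y') ` {t - \<epsilon>..t + \<epsilon>}) \<le> d1 t x x' + 2 * \<epsilon>)"

lemma tripod_2eps_eps_related:
  assumes "tripod_2eps \<epsilon> dX dY Z \<phi>X \<phi>Y" "z \<in> Z" "z' \<in> Z"
  shows "eps_related \<epsilon> dX dY (\<phi>X z) (\<phi>X z') (\<phi>Y z) (\<phi>Y z')"
    and "eps_related \<epsilon> dY dX (\<phi>Y z) (\<phi>Y z') (\<phi>X z) (\<phi>X z')"
  using assms by (auto simp: tripod_2eps_def eps_related_def)

lemma rips_lev_eps_related:
  assumes \<sigma>: "\<sigma> \<in> rips_lev d1 A p" and p: "valid_dp p" and \<epsilon>: "0 \<le> \<epsilon>"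
    and \<tau>: "\<tau> \<subseteq> B" "finite \<tau>" "\<tau> \<noteq> {}"
    and nonneg: "\<And>y y' t. y \<in> B \<Longrightarrow> y' \<in> B \<Longrightarrow> 0 \<le> d2 t y y'"
    and rel: "\<And>y y'. y \<in> \<tau> \<Longrightarrow> y' \<in> \<tau> \<Longrightarrow> \<exists>x\<in>\<sigma>. \<exists>x'\<in>\<sigma>. eps_related \<epsilon> d1 d2 x x' y y'"
  shows "\<tau> \<in> rips_lev d2 B (dp_shift (2 * \<epsilon>) p)"
proof -
  obtain a b \<delta> where pp: "p = (a, b, \<delta>)" by (cases p)
  have ab: "a \<le> b" using p by (simp add: pp valid_dp_def)
  note m = rips_lev_memD[OF \<sigma>[unfolded pp]]
  show ?thesis
    unfolding pp dp_shift_def prod.case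
  proof (rule rips_lev_memI[OF \<tau>])
    fix y y' assume y: "y \<in> \<tau>" "y' \<in> \<tau>"
    then obtain x x' where x: "x \<in> \<sigma>" "x' \<in> \<sigma>" and r: "eps_related \<epsilon> d1 d2 x x' y y'"
      using rel by blast
    have nn: "\<And>t. 0 \<le> d2 t y y'" using nonneg y \<tau>(1) by blast
    have "int_dist d2 (a - 2 * \<epsilon>) (b + 2 * \<epsilon>) y y' \<le> int_dist d2 (a - \<epsilon>) (b + \<epsilon>) y y'"
      by (rule int_dist_antimono) (use nn ab \<epsilon> in auto)
    also have "\<dots> \<le> int_dist d1 a b x x' + 2 * \<epsilon>"
      by (rule int_dist_transfer) (use r nn ab \<epsilon> in \<open>auto simp: eps_related_def\<close>)
    also have "\<dots> \<le> \<delta> + 2 * \<epsilon>" using m(4)[OF x] by simp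
    finally show "int_dist d2 (a - 2 * \<epsilon>) (b + 2 * \<epsilon>) y y' \<le> \<delta> + 2 * \<epsilon>" .
  qed
qed

lemma rips_lev_image_eps_related:
  assumes \<sigma>: "\<sigma> \<in> rips_lev d1 A p" and p: "valid_dp p" and \<epsilon>: "0 \<le> \<epsilon>" and h: "h ` \<sigma> \<subseteq> B"
    and nonneg: "\<And>y y' t. y \<in> B \<Longrightarrow> y' \<in> B \<Longrightarrow> 0 \<le> d2 t y y'"
    and rel: "\<And>x x'. x \<in> \<sigma> \<Longrightarrow> x' \<in> \<sigma> \<Longrightarrow> eps_related \<epsilon> d1 d2 x x' (h x) (h x')"
  shows "h ` \<sigma> \<in> rips_lev d2 B (dp_shift (2 * \<epsilon>) p)"
proof (rule rips_lev_eps_related[OF \<sigma> p \<epsilon> h _ _ nonneg])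
  have "finite \<sigma>" "\<sigma> \<noteq> {}" using \<sigma> by (auto simp: rips_lev_def rips_def split: prod.splits)
  then show "finite (h ` \<sigma>)" "h ` \<sigma> \<noteq> {}" by auto
  show "\<exists>x\<in>\<sigma>. \<exists>x'\<in>\<sigma>. eps_related \<epsilon> d1 d2 x x' y y'" if "y \<in> h ` \<sigma>" "y' \<in> h ` \<sigma>" for y y'
    using that rel by blast
qed

lemma tripod_vertex_map:
  assumes tri: "tripod Z \<phi>X \<phi>Y X Y" and t2: "tripod_2eps \<epsilon> dX dY Z \<phi>X \<phi>Y"
  shows "\<exists>\<psi>. \<psi> ` X \<subseteq> Y \<and> (\<forall>x\<in>X. \<forall>x'\<in>X.
           eps_related \<epsilon> dX dY x x' (\<psi> x) (\<psi> x') \<and> eps_related \<epsilon> dY dX (\<psi> x) (\<psi> x') x x')"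
proof -
  have "\<forall>x\<in>X. \<exists>z. z \<in> Z \<and> \<phi>X z = x" using tri by (auto simp: tripod_def)
  from bchoice[OF this] obtain \<zeta> where \<zeta>: "\<forall>x\<in>X. \<zeta> x \<in> Z \<and> \<phi>X (\<zeta> x) = x" by blast
  have "(\<lambda>x. \<phi>Y (\<zeta> x)) ` X \<subseteq> Y" using tri \<zeta> by (auto simp: tripod_def)
  moreover have "\<forall>x\<in>X. \<forall>x'\<in>X. eps_related \<epsilon> dX dY x x' (\<phi>Y (\<zeta> x)) (\<phi>Y (\<zeta> x')) \<and>
      eps_related \<epsilon> dY dX (\<phi>Y (\<zeta> x)) (\<phi>Y (\<zeta> x')) x x'"
  proof (intro ballI)
    fix x x' assume "x \<in> X" "x' \<in> X"
    then have z: "\<zeta> x \<in> Z" "\<zeta> x' \<in> Z" "\<phi>X (\<zeta> x) = x" "\<phi>X (\<zeta> x') = x'" using \<zeta> by auto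
    show "eps_related \<epsilon> dX dY x x' (\<phi>Y (\<zeta> x)) (\<phi>Y (\<zeta> x')) \<and>
        eps_related \<epsilon> dY dX (\<phi>Y (\<zeta> x)) (\<phi>Y (\<zeta> x')) x x'"
      using tripod_2eps_eps_related[OF t2 z(1,2)] by (simp add: z(3,4))
  qed
  ultimately show ?thesis by blast
qed

text \<open>\<open>\<psi>\<close> maps \<open>S\<close> onto \<open>T = \<psi> ` S\<close> and has a section \<open>\<psi>'\<close>; both are simplicial after a
  \<open>2\<epsilon>\<close>-shift, and \<open>\<psi>' \<circ> \<psi>\<close> is contiguous to the identity after a \<open>4\<epsilon>\<close>-shift.\<close>

lemma eps_related_vertex_map_interleaved:
  fixes dX :: "real \<Rightarrow> 'a::linorder \<Rightarrow> 'a \<Rightarrow> real" and dY :: "real \<Rightarrow> 'b::linorder \<Rightarrow> 'b \<Rightarrow> real"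
    and \<psi> :: "'a \<Rightarrow> 'b"
  assumes dX: "dms X dX" and dY: "dms Y dY" and \<epsilon>: "0 < \<epsilon>" and SX: "S \<subseteq> X" and TY: "\<psi> ` S \<subseteq> Y"
    and relXY: "\<And>x x'. x \<in> S \<Longrightarrow> x' \<in> S \<Longrightarrow> eps_related \<epsilon> dX dY x x' (\<psi> x) (\<psi> x')"
    and relYX: "\<And>x x'. x \<in> S \<Longrightarrow> x' \<in> S \<Longrightarrow> eps_related \<epsilon> dY dX (\<psi> x) (\<psi> x') x x'"
  shows "interleaved (2 * \<epsilon>) (hom_module k dX S :: ('a list, 'f::field) dmod) (hom_module k dY (\<psi> ` S))"
proof -
  define T where "T = \<psi> ` S"
  define \<psi>' where "\<psi>' = inv_into S \<psi>"
  have \<psi>': "\<psi>' y \<in> S" "\<psi> (\<psi>' y) = y" if "y \<in> T" for y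
    using that by (simp_all add: T_def \<psi>'_def inv_into_into f_inv_into_f)
  have S: "finite S" using dX SX by (simp add: dms_def finite_subset)
  have T: "finite T" using S by (simp add: T_def)
  have TY: "T \<subseteq> Y" using TY by (simp add: T_def)
  have nnX: "\<And>x y t. x \<in> S \<Longrightarrow> y \<in> S \<Longrightarrow> 0 \<le> dX t x y" using dms_nonneg[OF dX] SX by blast
  have nnY: "\<And>x y t. x \<in> T \<Longrightarrow> y \<in> T \<Longrightarrow> 0 \<le> dY t x y" using dms_nonneg[OF dY] TY by blast
  have rips_vertices: "\<sigma> \<subseteq> V" "finite \<sigma>" "\<sigma> \<noteq> {}" if "\<sigma> \<in> rips_lev d V p" for \<sigma> d V p
    using that by (auto simp: rips_lev_def rips_def split: prod.splits)
  have \<psi>_simplicial: "\<psi> ` \<sigma> \<in> rips_lev dY T (dp_shift (2 * \<epsilon>) p)"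
    if p: "valid_dp p" and \<sigma>: "\<sigma> \<in> rips_lev dX S p" for p \<sigma>
    using rips_vertices[OF \<sigma>] \<epsilon>
    by (intro rips_lev_image_eps_related[OF \<sigma> p _ _ nnY relXY]) (auto simp: T_def)
  have \<psi>'_simplicial: "\<psi>' ` \<sigma> \<in> rips_lev dX S (dp_shift (2 * \<epsilon>) p)"
    if p: "valid_dp p" and \<sigma>: "\<sigma> \<in> rips_lev dY T p" for p \<sigma>
  proof (rule rips_lev_image_eps_related[OF \<sigma> p _ _ nnX])
    have "\<sigma> \<subseteq> T" using rips_vertices[OF \<sigma>] by simp
    then show "\<psi>' ` \<sigma> \<subseteq> S" using \<psi>' by auto
    show "eps_related \<epsilon> dY dX y y' (\<psi>' y) (\<psi>' y')" if "y \<in> \<sigma>" "y' \<in> \<sigma>" for y y'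
    proof -
      have "y \<in> T" "y' \<in> T" using that \<open>\<sigma> \<subseteq> T\<close> by auto
      then show ?thesis using relYX[OF \<psi>'(1) \<psi>'(1)] \<psi>'(2) by simp
    qed
  qed (use \<epsilon> in simp)
  have contiguous: "\<sigma> \<union> \<psi>' ` \<psi> ` \<sigma> \<in> rips_lev dX S (dp_shift (2 * (2 * \<epsilon>)) p)"
    if p: "valid_dp p" and \<sigma>: "\<sigma> \<in> rips_lev dX S p" for p \<sigma>
  proof -
    note \<sigma>S = rips_vertices[OF \<sigma>]
    have p2: "valid_dp (dp_shift (2 * \<epsilon>) p)" using valid_dp_shift[OF p] \<epsilon> by simp
    have "\<sigma> \<union> \<psi>' ` \<psi> ` \<sigma> \<in> rips_lev dX S (dp_shift (2 * \<epsilon>) (dp_shift (2 * \<epsilon>) p))"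
    proof (rule rips_lev_eps_related[OF \<psi>_simplicial[OF p \<sigma>] p2 _ _ _ _ nnX])
      have "\<psi> ` \<sigma> \<subseteq> T" using \<sigma>S(1) by (auto simp: T_def)
      then show "\<sigma> \<union> \<psi>' ` \<psi> ` \<sigma> \<subseteq> S" "finite (\<sigma> \<union> \<psi>' ` \<psi> ` \<sigma>)" "\<sigma> \<union> \<psi>' ` \<psi> ` \<sigma> \<noteq> {}"
        using \<sigma>S \<psi>' by auto
      have vertex: "w \<in> S" "\<psi> w \<in> \<psi> ` \<sigma>" if "w \<in> \<sigma> \<union> \<psi>' ` \<psi> ` \<sigma>" for w
        using that \<sigma>S(1) \<open>\<psi> ` \<sigma> \<subseteq> T\<close> \<psi>' by auto
      show "\<exists>y\<in>\<psi> ` \<sigma>. \<exists>y'\<in>\<psi> ` \<sigma>. eps_related \<epsilon> dY dX y y' w w'"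
        if "w \<in> \<sigma> \<union> \<psi>' ` \<psi> ` \<sigma>" "w' \<in> \<sigma> \<union> \<psi>' ` \<psi> ` \<sigma>" for w w'
        using relYX[OF vertex(1)[OF that(1)] vertex(1)[OF that(2)]] vertex(2)[OF that(1)]
          vertex(2)[OF that(2)] by blast
    qed (use \<epsilon> in simp)
    then show ?thesis by (simp add: dp_shift_shift)
  qed
  show "interleaved (2 * \<epsilon>) (hom_module k dX S :: ('a list, 'f) dmod) (hom_module k dY (\<psi> ` S))"
    unfolding T_def[symmetric]
  proof (rule interleaved_hom_modules[OF _ _ contiguous \<psi>'(2)])
    show "shifted_simplicial_map (2 * \<epsilon>) \<psi> dX S dY T"
      by unfold_locales (use S T \<epsilon> \<psi>_simplicial rips_lev_mono[OF dX SX] rips_lev_mono[OF dY TY] in auto)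
    show "shifted_simplicial_map (2 * \<epsilon>) \<psi>' dY T dX S"
      by unfold_locales (use S T \<epsilon> \<psi>'_simplicial rips_lev_mono[OF dX SX] rips_lev_mono[OF dY TY] in auto)
  qed
qed

lemma tripod_interleaved_hom_module:
  fixes dX :: "real \<Rightarrow> 'a::linorder \<Rightarrow> 'a \<Rightarrow> real" and dY :: "real \<Rightarrow> 'b::linorder \<Rightarrow> 'b \<Rightarrow> real"
  assumes dX: "dms X dX" and dY: "dms Y dY" and \<epsilon>: "0 < \<epsilon>"
    and tri: "tripod Z \<phi>X \<phi>Y X Y" and t2: "tripod_2eps \<epsilon> dX dY Z \<phi>X \<phi>Y" and SX: "S \<subseteq> X"
  shows "\<exists>T. T \<subseteq> Y \<and> card T \<le> card S \<and>
           interleaved (2 * \<epsilon>) (hom_module k dX S :: ('a list, 'f::field) dmod) (hom_module k dY T)"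
proof -
  obtain \<psi> :: "'a \<Rightarrow> 'b" where \<psi>: "\<psi> ` X \<subseteq> Y" and rel: "\<forall>x\<in>X. \<forall>x'\<in>X.
      eps_related \<epsilon> dX dY x x' (\<psi> x) (\<psi> x') \<and> eps_related \<epsilon> dY dX (\<psi> x) (\<psi> x') x x'"
    using tripod_vertex_map[OF tri t2] by blast
  have "\<psi> ` S \<subseteq> Y" using \<psi> SX by blast
  moreover have "eps_related \<epsilon> dX dY x x' (\<psi> x) (\<psi> x')" "eps_related \<epsilon> dY dX (\<psi> x) (\<psi> x') x x'"
    if "x \<in> S" "x' \<in> S" for x x'
    using rel subsetD[OF SX that(1)] subsetD[OF SX that(2)] by simp_all
  ultimately have "interleaved (2 * \<epsilon>) (hom_module k dX S :: ('a list, 'f) dmod) (hom_module k dY (\<psi> ` S))"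
    by (rule eps_related_vertex_map_interleaved[OF dX dY \<epsilon> SX])
  moreover have "card (\<psi> ` S) \<le> card S"
    using dX SX by (intro card_image_le) (auto simp: dms_def intro: finite_subset)
  ultimately show ?thesis using \<open>\<psi> ` S \<subseteq> Y\<close> by blast
qed

definition quotient_space :: "('x \<Rightarrow> 'f::field) set set \<Rightarrow> ('x \<Rightarrow> 'f) set \<Rightarrow> ('x \<Rightarrow> 'f) set \<Rightarrow> bool" where
  "quotient_space C B Zc \<longleftrightarrow> fun_subspace B \<and> fun_subspace Zc \<and> C = {coset B z | z. z \<in> Zc}"

lemma quotient_space_zero: "quotient_space C B Zc \<Longrightarrow> coset B (\<lambda>_. 0) \<in> C"
  unfolding quotient_space_def using fun_subspace_zero by blast

lemma quotient_space_coset: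
  assumes cs: "quotient_space C B Zc" and A: "A \<in> C" and w: "w \<in> A"
  shows "A = coset B w"
proof -
  have B: "fun_subspace B" using cs by (simp add: quotient_space_def)
  obtain z where z: "A = coset B z" "z \<in> Zc" using cs A by (auto simp: quotient_space_def)
  then have "(\<lambda>x. w x - z x) \<in> B" using w by (simp add: mem_coset[OF B])
  then have "(\<lambda>x. - (w x - z x)) \<in> B" by (rule fun_subspace_uminus[OF B])
  then have "(\<lambda>x. z x - w x) \<in> B" by simp
  then show ?thesis using z by (simp add: coset_eq_iff[OF B])
qed

lemma quotient_space_nonempty:
  assumes cs: "quotient_space C B Zc" and A: "A \<in> C"
  shows "\<exists>w. w \<in> A"
proof -
  have B: "fun_subspace B" using cs by (simp add: quotient_space_def)
  obtain z where z: "A = coset B z" using cs A by (auto simp: quotient_space_def)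
  then show ?thesis using coset_self[OF B] by blast
qed

lemma quotient_space_csum:
  assumes cs: "quotient_space C B Zc" and "X \<in> C" "Y \<in> C"
  shows "csum X Y \<in> C"
proof -
  have B: "fun_subspace B" and Z: "fun_subspace Zc" using cs by (auto simp: quotient_space_def)
  obtain u v where "X = coset B u" "u \<in> Zc" "Y = coset B v" "v \<in> Zc" using cs assms
    by (auto simp: quotient_space_def)
  then show ?thesis using csum_coset[OF B] fun_subspace_add[OF Z] cs by (auto simp: quotient_space_def)
qed

lemma quotient_space_cscale:
  assumes cs: "quotient_space C B Zc" and "X \<in> C" "c \<noteq> 0"
  shows "cscale c X \<in> C"
proof -
  have B: "fun_subspace B" and Z: "fun_subspace Zc" using cs by (auto simp: quotient_space_def)
  obtain u where "X = coset B u" "u \<in> Zc" using cs assms by (auto simp: quotient_space_def)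
  then show ?thesis using cscale_coset[OF B assms(3)] fun_subspace_smult[OF Z] cs
    by (auto simp: quotient_space_def)
qed

lemma lin_map_comp: "lin_map f C D \<Longrightarrow> lin_map g D E \<Longrightarrow> lin_map (g \<circ> f) C E"
  by (simp add: lin_map_def)

lemma lin_map_zero_class:
  assumes cC: "quotient_space C B Zc" and cD: "quotient_space D B' Zc'" and G: "lin_map G C D"
  shows "G (coset B (\<lambda>_. 0)) = coset B' (\<lambda>_. 0)"
proof -
  have B: "fun_subspace B" and B': "fun_subspace B'" using cC cD by (auto simp: quotient_space_def)
  let ?Z = "coset B (\<lambda>_. 0)"
  have Z: "?Z \<in> C" by (rule quotient_space_zero[OF cC])
  have "csum ?Z ?Z = ?Z" using csum_coset[OF B] by simp
  then have e: "G ?Z = csum (G ?Z) (G ?Z)" using G Z unfolding lin_map_def by metis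
  have GZ: "G ?Z \<in> D" using G Z by (simp add: lin_map_def)
  then obtain w where w: "G ?Z = coset B' w" using cD by (auto simp: quotient_space_def)
  then have "coset B' w = coset B' (\<lambda>x. w x + w x)" using e csum_coset[OF B'] by simp
  then have "(\<lambda>x. w x - (w x + w x)) \<in> B'" by (simp add: coset_eq_iff[OF B'])
  then have "(\<lambda>x. w x - 0) \<in> B'" using fun_subspace_uminus[OF B'] by fastforce
  then show ?thesis using w by (simp add: coset_eq_iff[OF B'])
qed

lemma lin_map_lincomb:
  assumes cC: "quotient_space C B Zc" and cD: "quotient_space D B' Zc'" and G: "lin_map G C D"
    and Bs: "set Bs \<subseteq> C" and zs: "length zs = length Bs" "\<And>i. i < length Bs \<Longrightarrow> zs!i \<in> Bs!i"
    and ws: "length ws = length Bs" "\<And>i. i < length Bs \<Longrightarrow> ws!i \<in> G (Bs!i)"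
  shows "m \<le> length Bs \<Longrightarrow> coset B (\<lambda>x. \<Sum>i<m. c i * (zs!i) x) \<in> C \<and>
           G (coset B (\<lambda>x. \<Sum>i<m. c i * (zs!i) x)) = coset B' (\<lambda>x. \<Sum>i<m. c i * (ws!i) x)"
proof (induction m)
  case 0
  then show ?case using quotient_space_zero[OF cC] lin_map_zero_class[OF cC cD G] by simp
next
  case (Suc m)
  have B: "fun_subspace B" and B': "fun_subspace B'" using cC cD by (auto simp: quotient_space_def)
  have m: "m < length Bs" using Suc by simp
  have BsC: "Bs!m \<in> C" using Bs m by auto
  have Bz: "Bs!m = coset B (zs!m)" by (rule quotient_space_coset[OF cC BsC zs(2)[OF m]])
  have GBD: "G (Bs!m) \<in> D" using G BsC by (simp add: lin_map_def)
  have Gw: "G (Bs!m) = coset B' (ws!m)" by (rule quotient_space_coset[OF cD GBD ws(2)[OF m]])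
  have last_term: "coset B (\<lambda>x. c m * (zs!m) x) \<in> C \<and> G (coset B (\<lambda>x. c m * (zs!m) x))
      = coset B' (\<lambda>x. c m * (ws!m) x)"
  proof (cases "c m = 0")
    case True
    then show ?thesis using quotient_space_zero[OF cC] lin_map_zero_class[OF cC cD G] by simp
  next
    case False
    have "coset B (\<lambda>x. c m * (zs!m) x) = cscale (c m) (Bs!m)" using Bz cscale_coset[OF B False] by simp
    moreover have "G (cscale (c m) (Bs!m)) = cscale (c m) (G (Bs!m))" using G BsC False
      by (simp add: lin_map_def)
    moreover have "cscale (c m) (G (Bs!m)) = coset B' (\<lambda>x. c m * (ws!m) x)"
      using Gw cscale_coset[OF B' False] by simp
    ultimately show ?thesis using quotient_space_cscale[OF cC BsC False] by simp
  qed
  have IH: "coset B (\<lambda>x. \<Sum>i<m. c i * (zs!i) x) \<in> C \<and>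
           G (coset B (\<lambda>x. \<Sum>i<m. c i * (zs!i) x)) = coset B' (\<lambda>x. \<Sum>i<m. c i * (ws!i) x)"
    using Suc by simp
  have eqC: "coset B (\<lambda>x. \<Sum>i<Suc m. c i * (zs!i) x)
      = csum (coset B (\<lambda>x. \<Sum>i<m. c i * (zs!i) x)) (coset B (\<lambda>x. c m * (zs!m) x))"
    using csum_coset[OF B] by simp
  have eqD: "coset B' (\<lambda>x. \<Sum>i<Suc m. c i * (ws!i) x)
      = csum (coset B' (\<lambda>x. \<Sum>i<m. c i * (ws!i) x)) (coset B' (\<lambda>x. c m * (ws!m) x))"
    using csum_coset[OF B'] by simp
  show ?case
  proof
    show "coset B (\<lambda>x. \<Sum>i<Suc m. c i * (zs!i) x) \<in> C" unfolding eqC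
      using quotient_space_csum[OF cC] IH last_term by blast
    show "G (coset B (\<lambda>x. \<Sum>i<Suc m. c i * (zs!i) x)) = coset B' (\<lambda>x. \<Sum>i<Suc m. c i * (ws!i) x)"
      unfolding eqC eqD using G IH last_term by (simp add: lin_map_def)
  qed
qed

lemma cls_indep_pullback:
  fixes C :: "('x \<Rightarrow> 'f::field) set set" and D :: "('y \<Rightarrow> 'f) set set"
  assumes cC: "quotient_space C B Zc" and cD: "quotient_space D B' Zc'" and G: "lin_map G C D"
    and Bs: "set Bs \<subseteq> C" and ind: "cls_indep D (map G Bs)"
  shows "cls_indep C Bs"
  unfolding cls_indep_def
proof (rule allI, rule allI, rule impI)
  fix c :: "nat \<Rightarrow> 'f" and zs
  assume a: "length zs = length Bs \<and> (\<forall>i<length Bs. zs ! i \<in> Bs ! i) \<and>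
      (\<exists>A0\<in>C. (\<lambda>_. 0) \<in> A0 \<and> (\<lambda>x. \<Sum>i<length Bs. c i * (zs ! i) x) \<in> A0)"
  have B: "fun_subspace B" and B': "fun_subspace B'" using cC cD by (auto simp: quotient_space_def)
  from a obtain A0 where A0: "A0 \<in> C" "(\<lambda>_. 0) \<in> A0" "(\<lambda>x. \<Sum>i<length Bs. c i * (zs ! i) x) \<in> A0" by blast
  have A0z: "A0 = coset B (\<lambda>_. 0)" by (rule quotient_space_coset[OF cC A0(1,2)])
  have A0s: "A0 = coset B (\<lambda>x. \<Sum>i<length Bs. c i * (zs ! i) x)" by (rule quotient_space_coset[OF cC A0(1,3)])
  define ws where "ws = map (\<lambda>i. SOME w. w \<in> G (Bs!i)) [0..<length Bs]"
  have wsl: "length ws = length Bs" by (simp add: ws_def)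
  have wsi: "ws!i \<in> G (Bs!i)" if "i < length Bs" for i
  proof -
    have "Bs!i \<in> C" using Bs that by auto
    then have "G (Bs!i) \<in> D" using G by (simp add: lin_map_def)
    then have "\<exists>w. w \<in> G (Bs!i)" by (rule quotient_space_nonempty[OF cD])
    then have "(SOME w. w \<in> G (Bs!i)) \<in> G (Bs!i)" by (rule someI_ex)
    then show ?thesis using that by (simp add: ws_def)
  qed
  have cmb: "G (coset B (\<lambda>x. \<Sum>i<length Bs. c i * (zs!i) x)) = coset B' (\<lambda>x. \<Sum>i<length Bs. c i * (ws!i) x)"
    using lin_map_lincomb[OF cC cD G Bs _ _ wsl wsi, of zs "length Bs" c] a by simp
  have "G (coset B (\<lambda>_. 0)) = coset B' (\<lambda>_. 0)" by (rule lin_map_zero_class[OF cC cD G])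
  then have eq: "coset B' (\<lambda>x. \<Sum>i<length Bs. c i * (ws!i) x) = coset B' (\<lambda>_. 0)"
    using cmb A0z A0s by simp
  have "\<exists>A0\<in>D. (\<lambda>_. 0) \<in> A0 \<and> (\<lambda>x. \<Sum>i<length (map G Bs). c i * (ws ! i) x) \<in> A0"
  proof (intro bexI conjI)
    show "coset B' (\<lambda>_. 0) \<in> D" by (rule quotient_space_zero[OF cD])
    show "(\<lambda>_. 0) \<in> coset B' (\<lambda>_. 0)" by (rule coset_self[OF B'])
    show "(\<lambda>x. \<Sum>i<length (map G Bs). c i * (ws ! i) x) \<in> coset B' (\<lambda>_. 0)"
      using eq coset_self[OF B', of "\<lambda>x. \<Sum>i<length Bs. c i * (ws!i) x"] by simp
  qed
  moreover have "length ws = length (map G Bs)" "\<forall>i<length (map G Bs). ws ! i \<in> map G Bs ! i"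
    using wsl wsi by auto
  ultimately show "\<forall>i<length Bs. c i = 0" using ind unfolding cls_indep_def by auto
qed

lemma rank_map_le_factor:
  fixes V :: "('x, 'f::field) dmod" and W :: "('y, 'f) dmod"
  assumes cW: "quotient_space (fst W q) BW ZW" and cV: "quotient_space (fst V q') BV ZV"
    and G: "lin_map G (fst W q) (fst V q')"
    and im: "snd V p' q' ` fst V p' \<subseteq> G ` (snd W p q ` fst W p)"
    and imW: "snd W p q ` fst W p \<subseteq> fst W q"
  shows "rank_map V p' q' \<le> rank_map W p q"
  unfolding rank_map_def
proof (rule Sup_subset_mono, rule subsetI)
  fix x assume "x \<in> {enat n |n. \<exists>As. length As = n \<and> set As \<subseteq> snd V p' q' ` fst V p'
      \<and> cls_indep (fst V q') As}"
  then have "\<exists>n As. x = enat n \<and> length As = n \<and> set As \<subseteq> snd V p' q' ` fst V p' \<and> cls_indep (fst V q') As"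
    by (simp only: mem_Collect_eq) metis
  then obtain n As where As0: "x = enat n" "length As
      = n" "set As \<subseteq> snd V p' q' ` fst V p'" "cls_indep (fst V q') As"
    by auto
  then have As: "x = enat (length As)" "set As \<subseteq> snd V p' q' ` fst V p'" "cls_indep (fst V q') As" by simp_all
  define Bs where "Bs = map (\<lambda>A. SOME B. B \<in> snd W p q ` fst W p \<and> G B = A) As"
  have pick: "(SOME B. B \<in> snd W p q ` fst W p \<and> G B = A) \<in> snd W p q ` fst W p \<and>
      G (SOME B. B \<in> snd W p q ` fst W p \<and> G B = A) = A" if "A \<in> set As" for A
  proof -
    have "A \<in> snd V p' q' ` fst V p'" using As(2) that by (rule subsetD)
    then have "A \<in> G ` (snd W p q ` fst W p)" using im by (rule subsetD[rotated])
    then obtain B where "B \<in> snd W p q ` fst W p" "A = G B" by (rule imageE)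
    then have "\<exists>B. B \<in> snd W p q ` fst W p \<and> G B = A" by blast
    then show ?thesis by (rule someI_ex)
  qed
  have Bs1: "set Bs \<subseteq> snd W p q ` fst W p" unfolding Bs_def using pick by auto
  have Bs2: "map G Bs = As" unfolding Bs_def map_map by (rule map_idI) (use pick in simp)
  have "set Bs \<subseteq> fst W q" using Bs1 imW by blast
  then have "cls_indep (fst W q) Bs"
    by (rule cls_indep_pullback[OF cW cV G]) (simp add: Bs2 As(3))
  moreover have "length Bs = length As" by (simp add: Bs_def)
  ultimately have "\<exists>As'. length As' = length As \<and> set As' \<subseteq> snd W p q ` fst W p \<and> cls_indep (fst W q) As'"
    using Bs1 by blast
  then show "x \<in> {enat n |n. \<exists>As. length As = n \<and> set As \<subseteq> snd W p q ` fst W p \<and> cls_indep (fst W q) As}"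
    using As(1) by blast
qed

section \<open>Rank inequalities from interleavings\<close>

definition dyn_module :: "('x, 'f::field) dmod \<Rightarrow> bool" where
  "dyn_module V \<longleftrightarrow> (\<forall>p. valid_dp p \<longrightarrow> (\<exists>B Zc. quotient_space (fst V p) B Zc)) \<and>
     (\<forall>p q. valid_dp p \<and> valid_dp q \<and> dp_le p q \<longrightarrow> lin_map (snd V p q) (fst V p) (fst V q)) \<and>
     (\<forall>p q r. valid_dp p \<and> valid_dp q \<and> valid_dp r \<and> dp_le p q \<and> dp_le q r \<longrightarrow>
        (\<forall>A\<in>fst V p. snd V q r (snd V p q A) = snd V p r A))"

lemma dyn_module_hom_module:
  assumes d: "dms X d" and SX: "S \<subseteq> X"
  shows "dyn_module (hom_module k d S :: ('a::linorder list, 'f::field) dmod)"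
proof -
  have S: "finite S" using d SX finite_subset by (auto simp: dms_def)
  let ?B = "\<lambda>p. boundaries k (rips_lev d S p) :: ('a list \<Rightarrow> 'f) set"
  let ?Z = "\<lambda>p. cycles k (rips_lev d S p) :: ('a list \<Rightarrow> 'f) set"
  have Bs: "fun_subspace (?B p)" for p by (rule boundaries_subspace[OF S rips_lev_subset_Pow])
  have Zs: "fun_subspace (?Z p)" for p by (rule cycles_subspace[OF S rips_lev_subset_Pow])
  have cs: "quotient_space (homology k (rips_lev d S p)) (?B p) (?Z p)" for p
    using Bs Zs by (simp add: quotient_space_def homology_eq_cosets)
  have sm: "csum (coset (?B p) z) (?B q) = coset (?B q) z" if "valid_dp p" "valid_dp q" "dp_le p q" for p q z
    by (rule csum_coset_superspace[OF Bs Bs boundaries_mono[OF rips_lev_mono[OF d SX that]]])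
  have zq: "z \<in> ?Z q" if "valid_dp p" "valid_dp q" "dp_le p q" "z \<in> ?Z p" for p q z
    using that chains_mono[OF rips_lev_mono[OF d SX that(1-3)]] by (auto simp: cycles_def)
  show ?thesis
    unfolding dyn_module_def hom_module_def fst_conv snd_conv
  proof (intro conjI allI impI ballI)
    fix p show "\<exists>B Zc. quotient_space (homology k (rips_lev d S p) :: ('a list \<Rightarrow> 'f) set set) B Zc"
      using cs by blast
  next
    fix p q assume pq: "valid_dp p \<and> valid_dp q \<and> dp_le p q"
    show "lin_map (\<lambda>A. csum A (?B q)) (homology k (rips_lev d S p)) (homology k (rips_lev d S q))"
      unfolding homology_eq_cosets
      by (rule lin_map_cosets[where L="\<lambda>z. z", OF Bs Bs Zs])
        (use pq in \<open>auto simp: sm[of p q] intro: zq[of p q]\<close>)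
  next
    fix p q r and A :: "('a list \<Rightarrow> 'f) set" assume pqr: "valid_dp p \<and> valid_dp q \<and> valid_dp r
        \<and> dp_le p q \<and> dp_le q r"
      and "A \<in> homology k (rips_lev d S p)"
    then obtain z where z: "A = coset (?B p) z" "z \<in> ?Z p" by (auto simp: homology_eq_cosets)
    have pr: "dp_le p r" using pqr by (auto simp: dp_le_def split: prod.splits)
    show "csum (csum A (?B q)) (?B r) = csum A (?B r)"
      using z pqr pr by (simp add: sm)
  qed
qed

lemma interleaved_triangle:
  assumes mV: "dyn_module V" and e0: "0 \<le> \<epsilon>0"
    and gm: "shifted_morph \<epsilon>0 g W V"
    and fg: "\<forall>p. valid_dp p \<longrightarrow> (\<forall>A\<in>fst V p. g (dp_shift \<epsilon>0 p) (f p A) = snd V p (dp_shift (2*\<epsilon>0) p) A)"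
    and fm: "shifted_morph \<epsilon>0 f V W"
    and p': "valid_dp p'" and q: "valid_dp q" and p''q: "dp_le (dp_shift \<epsilon>0 p') q" and A: "A \<in> fst V p'"
  shows "g q (snd W (dp_shift \<epsilon>0 p') q (f p' A)) = snd V p' (dp_shift \<epsilon>0 q) A"
proof -
  let ?p'' = "dp_shift \<epsilon>0 p'" and ?q0 = "dp_shift \<epsilon>0 q"
  have vp'': "valid_dp ?p''" by (rule valid_dp_shift[OF p' e0])
  have vq0: "valid_dp ?q0" by (rule valid_dp_shift[OF q e0])
  have v2: "valid_dp (dp_shift (2*\<epsilon>0) p')" using valid_dp_shift[OF p', of "2*\<epsilon>0"] e0 by simp
  have le2: "dp_le p' (dp_shift (2*\<epsilon>0) p')" using dp_le_shift[of "2*\<epsilon>0" p'] e0 by simp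
  have l2q0: "dp_le (dp_shift (2*\<epsilon>0) p') ?q0"
    using dp_shift_mono[OF p''q, of \<epsilon>0] by (simp add: dp_shift_shift)
  have fA: "f p' A \<in> fst W ?p''" using fm p' A unfolding shifted_morph_def lin_map_def by blast
  have "g q (snd W ?p'' q (f p' A)) = snd V (dp_shift \<epsilon>0 ?p'') ?q0 (g ?p'' (f p' A))"
    using gm vp'' q p''q fA unfolding shifted_morph_def by blast
  also have "g ?p'' (f p' A) = snd V p' (dp_shift (2*\<epsilon>0) p') A" using fg p' A by blast
  also have "dp_shift \<epsilon>0 ?p'' = dp_shift (2*\<epsilon>0) p'" by (rule dp_shift_shift)
  also have "snd V (dp_shift (2*\<epsilon>0) p') ?q0 (snd V p' (dp_shift (2*\<epsilon>0) p') A) = snd V p' ?q0 A"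
    using mV p' v2 vq0 le2 l2q0 A unfolding dyn_module_def by blast
  finally show ?thesis .
qed

text \<open>With \<open>p'' = p' + \<epsilon>0 \<le> p\<close>, the map \<open>V(p' \<le> q + \<eta>)\<close> factors as
  \<open>V(q + \<epsilon>0 \<le> q + \<eta>) \<circ> g\<^sub>q \<circ> W(p \<le> q) \<circ> W(p'' \<le> p) \<circ> f\<^sub>p\<^sub>'\<close>, so its image lies in the image of
  \<open>W(p \<le> q)\<close> under a linear map.\<close>

lemma rank_map_interleaved:
  fixes V :: "('x, 'f::field) dmod" and W :: "('y, 'f) dmod"
  assumes mV: "dyn_module V" and mW: "dyn_module W" and il: "interleaved \<epsilon>0 V W" and e0: "0 \<le> \<epsilon>0"
    and \<eta>: "\<epsilon>0 \<le> \<eta>" and p: "valid_dp p" and q: "valid_dp q" and pq: "dp_le p q"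
    and p': "valid_dp p'" and p'p: "p' = (case p of (a1,a2,a3) \<Rightarrow> (a1 + \<eta>, a2 - \<eta>, a3 - \<eta>))"
  shows "rank_map V p' (dp_shift \<eta> q) \<le> rank_map W p q"
proof -
  obtain f g where fm: "shifted_morph \<epsilon>0 f V W" and gm: "shifted_morph \<epsilon>0 g W V"
    and fg: "\<forall>p. valid_dp p \<longrightarrow> (\<forall>A\<in>fst V p. g (dp_shift \<epsilon>0 p) (f p A) = snd V p (dp_shift (2*\<epsilon>0) p) A)"
    using il unfolding interleaved_def by blast
  let ?q' = "dp_shift \<eta> q" and ?q0 = "dp_shift \<epsilon>0 q" and ?p'' = "dp_shift \<epsilon>0 p'"
  have vq0: "valid_dp ?q0" by (rule valid_dp_shift[OF q e0])
  have vq': "valid_dp ?q'" by (rule valid_dp_shift[OF q]) (use e0 \<eta> in simp)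
  have q0q': "dp_le ?q0 ?q'" by (rule dp_shift_le_shift[OF \<eta>])
  have vp'': "valid_dp ?p''" by (rule valid_dp_shift[OF p' e0])
  have p''p: "dp_le ?p'' p" using p'p \<eta> by (auto simp: dp_le_def dp_shift_def split: prod.splits)
  have p''q: "dp_le ?p'' q" by (rule dp_le_trans[OF p''p pq])
  have l1: "dp_le p' ?q0"
    by (rule dp_le_trans[OF dp_le_shift[OF e0] dp_le_trans[OF p''q dp_le_shift[OF e0]]])
  obtain BW ZW where cW: "quotient_space (fst W q) BW ZW" using mW q unfolding dyn_module_def by blast
  obtain BV ZV where cV: "quotient_space (fst V ?q') BV ZV" using mV vq' unfolding dyn_module_def by blast
  have glin: "lin_map (g q) (fst W q) (fst V ?q0)" using gm q unfolding shifted_morph_def by blast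
  have slin: "lin_map (snd V ?q0 ?q') (fst V ?q0) (fst V ?q')"
    using mV vq0 vq' q0q' unfolding dyn_module_def by blast
  let ?G = "snd V ?q0 ?q' \<circ> g q"
  have G: "lin_map ?G (fst W q) (fst V ?q')" by (rule lin_map_comp[OF glin slin])
  have imW: "snd W p q ` fst W p \<subseteq> fst W q"
    using mW p q pq unfolding dyn_module_def lin_map_def by blast
  have im: "snd V p' ?q' ` fst V p' \<subseteq> ?G ` (snd W p q ` fst W p)"
  proof
    fix A' assume "A' \<in> snd V p' ?q' ` fst V p'"
    then obtain A where A: "A \<in> fst V p'" "A' = snd V p' ?q' A" by blast
    have fA: "f p' A \<in> fst W ?p''" using fm p' A(1) unfolding shifted_morph_def lin_map_def by blast
    let ?B0 = "snd W ?p'' p (f p' A)"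
    have B0: "?B0 \<in> fst W p" using mW vp'' p p''p fA unfolding dyn_module_def lin_map_def by blast
    have "snd W p q ?B0 = snd W ?p'' q (f p' A)"
      using mW vp'' p q p''p pq fA unfolding dyn_module_def by blast
    then have "?G (snd W p q ?B0) = snd V ?q0 ?q' (snd V p' ?q0 A)"
      using interleaved_triangle[OF mV e0 gm fg fm p' q p''q A(1)] by simp
    also have "\<dots> = A'" using mV p' vq0 vq' l1 q0q' A unfolding dyn_module_def by blast
    finally show "A' \<in> ?G ` (snd W p q ` fst W p)" using B0 by (metis image_eqI)
  qed
  show ?thesis by (rule rank_map_le_factor[OF cW cV G im imW])
qed

lemma le6_shift: "0 \<le> \<eta> \<Longrightarrow> le6 a (r6_shift \<eta> a)"
  by (auto simp: le6_def r6_shift_def split: prod.splits)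

lemma le6_trans: "le6 a b \<Longrightarrow> le6 b c \<Longrightarrow> le6 a c"
  by (auto simp: le6_def split: prod.splits)

lemma r6_shift_neq: "0 < \<eta> \<Longrightarrow> r6_shift \<eta> a \<noteq> a"
  by (auto simp: r6_shift_def split: prod.splits)

lemma admissible_convex: "admissible b \<Longrightarrow> admissible c \<Longrightarrow> le6 b a \<Longrightarrow> le6 a c \<Longrightarrow> admissible a"
  by (auto simp: admissible_def le6_def dp_le_def split: prod.splits)

lemma triv_nonadmissible_shift:
  assumes e: "0 < \<eta>" and t: "triv_nonadmissible (r6_shift \<eta> a)"
  shows "triv_nonadmissible a"
proof -
  have nb: "\<not> (\<exists>b. admissible b \<and> le6 b (r6_shift \<eta> a) \<and> b \<noteq> r6_shift \<eta> a)"
    and na: "\<not> admissible (r6_shift \<eta> a)" using t by (auto simp: triv_nonadmissible_def)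
  have l: "le6 a (r6_shift \<eta> a)" using le6_shift e by simp
  have "\<not> admissible a" using nb l r6_shift_neq[OF e, of a] by metis
  moreover have "\<not> (\<exists>b. admissible b \<and> le6 b a \<and> b \<noteq> a)"
  proof
    assume "\<exists>b. admissible b \<and> le6 b a \<and> b \<noteq> a"
    then obtain b where b: "admissible b" "le6 b a" by blast
    then have "le6 b (r6_shift \<eta> a)" using le6_trans l by blast
    moreover have "b \<noteq> r6_shift \<eta> a" using b(1) na by blast
    ultimately show False using nb b(1) by blast
  qed
  ultimately show ?thesis by (simp add: triv_nonadmissible_def)
qed

lemma triv_nonadmissible_if_shift_admissible:
  assumes e: "0 < \<eta>" and ad: "admissible (r6_shift \<eta> a)" and na: "\<not> admissible a"
  shows "triv_nonadmissible a"
proof -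
  have l: "le6 a (r6_shift \<eta> a)" using le6_shift e by simp
  have "\<not> (\<exists>b. admissible b \<and> le6 b a \<and> b \<noteq> a)"
    using admissible_convex[OF _ ad _ l] na by blast
  then show ?thesis using na by (simp add: triv_nonadmissible_def)
qed

lemma adapted_rank_shift_le:
  fixes V :: "('x, 'f::field) dmod" and W :: "('y, 'f) dmod"
  assumes mV: "dyn_module V" and mW: "dyn_module W" and il: "interleaved \<epsilon>0 V W" and e0: "0 \<le> \<epsilon>0"
    and e: "\<epsilon>0 \<le> \<eta>" and ep: "0 < \<eta>"
  shows "adapted_rank V (r6_shift \<eta> a) \<le> adapted_rank W a"
proof -
  obtain a1 a2 a3 a4 a5 a6 where aa: "a = (a1, a2, a3, a4, a5, a6)" by (cases a) auto
  have sh: "r6_shift \<eta> a = (a1 + \<eta>, a2 - \<eta>, a3 - \<eta>, a4 - \<eta>, a5 + \<eta>, a6 + \<eta>)"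
    by (simp add: aa r6_shift_def)
  consider "admissible (r6_shift \<eta> a)" "admissible a" | "triv_nonadmissible a"
    | "\<not> admissible (r6_shift \<eta> a)" "\<not> triv_nonadmissible (r6_shift \<eta> a)"
    using triv_nonadmissible_if_shift_admissible[OF ep] triv_nonadmissible_shift[OF ep] by blast
  then show ?thesis
  proof cases
    case 1
    have p: "valid_dp (a1, a2, a3)" and q: "valid_dp (a4, a5, a6)" and pq: "dp_le (a1, a2, a3) (a4, a5, a6)"
      using 1(2) by (auto simp: aa admissible_def valid_dp_def)
    have p': "valid_dp (a1 + \<eta>, a2 - \<eta>, a3 - \<eta>)" using 1(1) by (auto simp: sh admissible_def valid_dp_def)
    have "rank_map V (a1 + \<eta>, a2 - \<eta>, a3 - \<eta>) (dp_shift \<eta> (a4, a5, a6))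
        \<le> rank_map W (a1, a2, a3) (a4, a5, a6)"
      by (rule rank_map_interleaved[OF mV mW il e0 e p q pq p']) simp
    then show ?thesis using 1 by (simp add: adapted_rank_def aa r6_shift_def dp_shift_def)
  next
    case 2
    then show ?thesis by (simp add: adapted_rank_def aa triv_nonadmissible_def)
  next
    case 3
    then show ?thesis by (simp add: adapted_rank_def sh)
  qed
qed

lemma erosion_dist_le_interleaved:
  fixes V :: "('x, 'f::field) dmod" and W :: "('y, 'f) dmod"
  assumes mV: "dyn_module V" and mW: "dyn_module W" and il: "interleaved \<epsilon>0 V W" and e0: "0 \<le> \<epsilon>0"
  shows "erosion_dist V W \<le> ereal \<epsilon>0"
proof (rule dense_ge)
  fix x assume x: "ereal \<epsilon>0 < x"
  show "erosion_dist V W \<le> x"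
  proof (cases x)
    case (real r)
    with x have r: "\<epsilon>0 < r" by simp
    have r0: "0 < r" using r e0 by simp
    have c1: "adapted_rank V (r6_shift r a) \<le> adapted_rank W a" for a
      using adapted_rank_shift_le[OF mV mW il e0 _ r0] r by simp
    have c2: "adapted_rank W (r6_shift r a) \<le> adapted_rank V a" for a
      using adapted_rank_shift_le[OF mW mV interleaved_sym[OF il] e0 _ r0] r by simp
    have "ereal r \<in> {ereal \<eta> | \<eta>. 0 < \<eta> \<and>
         (\<forall>a. adapted_rank V (r6_shift \<eta> a) \<le> adapted_rank W a \<and>
              adapted_rank W (r6_shift \<eta> a) \<le> adapted_rank V a)}"
      using r0 c1 c2 by blast
    then show ?thesis unfolding erosion_dist_def real by (rule Inf_lower)
  next
    case PInf then show ?thesis by simp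
  next
    case MInf then show ?thesis using x by simp
  qed
qed

lemma erosion_dist_le_interleaving_dist:
  fixes V :: "('x, 'f::field) dmod" and W :: "('y, 'f) dmod"
  assumes mV: "dyn_module V" and mW: "dyn_module W"
  shows "erosion_dist V W \<le> interleaving_dist V W"
  unfolding interleaving_dist_def
  by (rule Inf_greatest) (auto intro: erosion_dist_le_interleaved[OF mV mW])

lemma hausdorff_mono:
  assumes "\<And>V W. V \<in> P \<Longrightarrow> W \<in> Q \<Longrightarrow> \<rho>1 V W \<le> \<rho>2 V W"
  shows "hausdorff \<rho>1 P Q \<le> hausdorff \<rho>2 P Q"
  unfolding hausdorff_def
proof (rule max.mono)
  show "(SUP V\<in>P. INF W\<in>Q. \<rho>1 V W) \<le> (SUP V\<in>P. INF W\<in>Q. \<rho>2 V W)"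
    by (rule SUP_mono) (use assms in \<open>blast intro: INF_mono\<close>)
  show "(SUP W\<in>Q. INF V\<in>P. \<rho>1 V W) \<le> (SUP W\<in>Q. INF V\<in>P. \<rho>2 V W)"
    by (rule SUP_mono) (use assms in \<open>blast intro: INF_mono\<close>)
qed

lemma hausdorff_le:
  assumes "\<And>V. V \<in> P \<Longrightarrow> \<exists>W\<in>Q. \<rho> V W \<le> c" and "\<And>W. W \<in> Q \<Longrightarrow> \<exists>V\<in>P. \<rho> V W \<le> c"
  shows "hausdorff \<rho> P Q \<le> c"
  unfolding hausdorff_def
proof (intro max.boundedI SUP_least)
  show "(INF W\<in>Q. \<rho> V W) \<le> c" if "V \<in> P" for V
    using assms(1)[OF that] by (blast intro: INF_lower2)
  show "(INF V\<in>P. \<rho> V W) \<le> c" if "W \<in> Q" for W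
    using assms(2)[OF that] by (blast intro: INF_lower2)
qed

lemma interleaving_dist_le: "0 \<le> \<epsilon> \<Longrightarrow> interleaved \<epsilon> V W \<Longrightarrow> interleaving_dist V W \<le> ereal \<epsilon>"
  unfolding interleaving_dist_def by (rule Inf_lower) blast

lemma hausdorff_erosion_le_interleaving:
  assumes "dms X dX" and "dms Y dY"
  shows "hausdorff erosion_dist (dgm_set k n X dX :: ('a::linorder list, 'f::field) dmod set)
           (dgm_set k n Y dY :: ('b::linorder list, 'f) dmod set)
         \<le> hausdorff interleaving_dist (dgm_set k n X dX :: ('a list, 'f) dmod set)
             (dgm_set k n Y dY :: ('b list, 'f) dmod set)"
  by (rule hausdorff_mono, rule erosion_dist_le_interleaving_dist)
     (auto simp: dgm_set_def intro: dyn_module_hom_module[OF assms(1)] dyn_module_hom_module[OF assms(2)])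

lemma tripod_dgm_set_interleaved:
  assumes "dms X dX" "dms Y dY" "0 < \<epsilon>" "tripod Z \<phi>X \<phi>Y X Y" "tripod_2eps \<epsilon> dX dY Z \<phi>X \<phi>Y"
    and "V \<in> (dgm_set k n X dX :: ('a::linorder list, 'f::field) dmod set)"
  shows "\<exists>W\<in>(dgm_set k n Y dY :: ('b::linorder list, 'f) dmod set). interleaved (2 * \<epsilon>) V W"
proof -
  obtain S where S: "V = hom_module k dX S" "S \<subseteq> X" "card S \<le> n"
    using assms(6) by (auto simp: dgm_set_def)
  obtain T where "T \<subseteq> Y" "card T \<le> card S" "interleaved (2 * \<epsilon>) V (hom_module k dY T)"
    using tripod_interleaved_hom_module[OF assms(1-5) S(2)] S(1) by blast
  moreover have "hom_module k dY T \<in> (dgm_set k n Y dY :: ('b list, 'f) dmod set)"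
    using \<open>T \<subseteq> Y\<close> \<open>card T \<le> card S\<close> S(3) by (auto simp: dgm_set_def)
  ultimately show ?thesis by blast
qed

lemma hausdorff_interleaving_le_tripod:
  assumes dX: "dms X dX" and dY: "dms Y dY" and \<epsilon>: "0 < \<epsilon>"
    and tri: "tripod Z \<phi>X \<phi>Y X Y" and t2: "tripod_2eps \<epsilon> dX dY Z \<phi>X \<phi>Y"
  shows "hausdorff interleaving_dist (dgm_set k n X dX :: ('a::linorder list, 'f::field) dmod set)
           (dgm_set k n Y dY :: ('b::linorder list, 'f) dmod set) \<le> ereal (2 * \<epsilon>)"
proof (rule hausdorff_le)
  have tri': "tripod Z \<phi>Y \<phi>X Y X" and t2': "tripod_2eps \<epsilon> dY dX Z \<phi>Y \<phi>X"
    using tri t2 by (auto simp: tripod_def tripod_2eps_def)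
  show "\<exists>W\<in>dgm_set k n Y dY. interleaving_dist V W \<le> ereal (2 * \<epsilon>)"
    if V: "V \<in> (dgm_set k n X dX :: ('a list, 'f) dmod set)" for V
  proof -
    obtain W where "W \<in> dgm_set k n Y dY" "interleaved (2 * \<epsilon>) V W"
      using tripod_dgm_set_interleaved[OF dX dY \<epsilon> tri t2 V] by blast
    then show ?thesis using \<epsilon> interleaving_dist_le[of "2 * \<epsilon>" V W] by auto
  qed
  show "\<exists>V\<in>dgm_set k n X dX. interleaving_dist V W \<le> ereal (2 * \<epsilon>)"
    if W: "W \<in> (dgm_set k n Y dY :: ('b list, 'f) dmod set)" for W
  proof -
    obtain V where "V \<in> dgm_set k n X dX" "interleaved (2 * \<epsilon>) W V"
      using tripod_dgm_set_interleaved[OF dY dX \<epsilon> tri' t2' W] by blast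
    then show ?thesis using \<epsilon> interleaving_dist_le[of "2 * \<epsilon>" V W] interleaved_sym[of _ W V] by auto
  qed
qed

lemma le_twice_Inf:
  fixes H :: ereal
  assumes E: "\<And>x. x \<in> E \<Longrightarrow> \<exists>\<epsilon>. x = ereal \<epsilon> \<and> 0 < \<epsilon> \<and> H \<le> ereal (2 * \<epsilon>)"
  shows "H \<le> 2 * Inf E"
proof (cases "E = {}")
  case False
  then obtain \<epsilon>0 where "ereal \<epsilon>0 \<in> E" using E by blast
  moreover have "0 \<le> Inf E" by (rule Inf_greatest) (use E in force)
  ultimately obtain m where m: "Inf E = ereal m" by (cases "Inf E") (auto dest: Inf_lower)
  show ?thesis
  proof (rule dense_ge)
    fix x assume x: "2 * Inf E < x"
    show "H \<le> x"
    proof (cases x)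
      case (real r)
      then have "Inf E < ereal (r / 2)" using x m by simp
      then obtain y where "y \<in> E" "y < ereal (r / 2)" by (auto simp: Inf_less_iff)
      with E obtain \<epsilon> where "\<epsilon> < r / 2" "H \<le> ereal (2 * \<epsilon>)" by force
      then show ?thesis using real by (simp add: order_trans)
    qed (use x in simp_all)
  qed
qed (simp add: top_ereal_def)

lemma hausdorff_interleaving_le_d_dyn:
  assumes "dms X dX" and "dms Y dY"
  shows "hausdorff interleaving_dist (dgm_set k n X dX :: ('a::linorder list, 'f::field) dmod set)
           (dgm_set k n Y dY :: ('b::linorder list, 'f) dmod set) \<le> 2 * d_dyn X dX Y dY"
  unfolding d_dyn_def
  by (rule le_twice_Inf) (auto intro: hausdorff_interleaving_le_tripod[OF assms])

theorem mainTheorem6: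
  fixes X :: "'a::linorder set" and dX :: "real \<Rightarrow> 'a \<Rightarrow> 'a \<Rightarrow> real"
    and Y :: "'b::linorder set" and dY :: "real \<Rightarrow> 'b \<Rightarrow> 'b \<Rightarrow> real"
    and n k :: nat
  assumes "dms X dX" and "dms Y dY"
  shows "hausdorff erosion_dist (dgm_set k n X dX :: ('a list, 'f::field) dmod set) (dgm_set k n Y dY :: ('b list, 'f) dmod set)
           \<le> hausdorff interleaving_dist (dgm_set k n X dX :: ('a list, 'f) dmod set) (dgm_set k n Y dY :: ('b list, 'f) dmod set)
         \<and> hausdorff interleaving_dist (dgm_set k n X dX :: ('a list, 'f) dmod set) (dgm_set k n Y dY :: ('b list, 'f) dmod set)
           \<le> 2 * d_dyn X dX Y dY"
  using hausdorff_erosion_le_interleaving[OF assms] hausdorff_interleaving_le_d_dyn[OF assms]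
  by blast

end
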